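(* Let $S$ be an infinite set, $\mathbb F_S$ the free group on $S$, and $T\subset S$ a subset with $|T|=|S|$; let $\Gamma_T\le\mathbb F_S$ be the subgroup generated by $T$. Then there is an amenable free action $\alpha\colon\mathbb F_S\curvearrowright\{0,1\}^S$ (product topology) whose restriction to $\Gamma_T$ is minimal.
   Context: $\mathbb F_S$ is discrete. An action by homeomorphisms of a discrete group $\Gamma$ on a compact space $X$ is amenable if there is a net of continuous maps $m_i\colon X\to\mathrm{Prob}(\Gamma)$ with $\sup_{x\in X}\|m_i(g.x)-g.m_i(x)\|_1\to0$ for every $g\in\Gamma$; free means $g.x\neq x$ for all $x$ and $g\neq e$; minimal means every orbit is dense. *)

theory Defs
  imports "HOL-Analysis.Analysis" "HOL-Algebra.Algebra" "HOL-Library.Equipollence"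
begin

text \<open>A letter (s, True) stands for the generator s, (s, False) for its inverse.\<close>

fun reduced :: "('a \<times> bool) list \<Rightarrow> bool" where
  "reduced [] = True"
| "reduced [x] = True"
| "reduced (x # y # zs) = (\<not> (fst x = fst y \<and> snd x \<noteq> snd y) \<and> reduced (y # zs))"

fun red :: "('a \<times> bool) list \<Rightarrow> ('a \<times> bool) list" where
  "red [] = []"
| "red (x # xs) = (case red xs of
       [] \<Rightarrow> [x]
     | y # ys \<Rightarrow> (if fst x = fst y \<and> snd x \<noteq> snd y then ys else x # y # ys))"

definition free_group :: "'a set \<Rightarrow> ('a \<times> bool) list monoid" where
  "free_group S = \<lparr> carrier = {w. fst ` set w \<subseteq> S \<and> reduced w},
                    mult = (\<lambda>u v. red (u @ v)),
                    one = [] \<rparr>"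

definition free_gen :: "'a \<Rightarrow> ('a \<times> bool) list" where
  "free_gen s = [(s, True)]"

definition cantor_top :: "'a set \<Rightarrow> ('a \<Rightarrow> bool) topology" where
  "cantor_top S = product_topology (\<lambda>_. discrete_topology (UNIV :: bool set)) S"

definition is_action :: "('g, 'b) monoid_scheme \<Rightarrow> 'x topology \<Rightarrow> ('g \<Rightarrow> 'x \<Rightarrow> 'x) \<Rightarrow> bool" where
  "is_action Gr Xt act \<longleftrightarrow>
     (\<forall>g \<in> carrier Gr. homeomorphic_map Xt Xt (act g)) \<and>
     (\<forall>x \<in> topspace Xt. act (one Gr) x = x) \<and>
     (\<forall>g \<in> carrier Gr. \<forall>h \<in> carrier Gr. \<forall>x \<in> topspace Xt.
        act (mult Gr g h) x = act g (act h x))"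

definition free_action :: "('g, 'b) monoid_scheme \<Rightarrow> 'x topology \<Rightarrow> ('g \<Rightarrow> 'x \<Rightarrow> 'x) \<Rightarrow> bool" where
  "free_action Gr Xt act \<longleftrightarrow>
     (\<forall>g \<in> carrier Gr. g \<noteq> one Gr \<longrightarrow> (\<forall>x \<in> topspace Xt. act g x \<noteq> x))"

definition minimal_on :: "'g set \<Rightarrow> 'x topology \<Rightarrow> ('g \<Rightarrow> 'x \<Rightarrow> 'x) \<Rightarrow> bool" where
  "minimal_on H Xt act \<longleftrightarrow>
     (\<forall>x \<in> topspace Xt. Xt closure_of ((\<lambda>g. act g x) ` H) = topspace Xt)"

definition prob_fun :: "('g, 'b) monoid_scheme \<Rightarrow> ('g \<Rightarrow> real) \<Rightarrow> bool" where
  "prob_fun Gr \<mu> \<longleftrightarrow> (\<forall>h. \<mu> h \<ge> 0) \<and> (\<forall>h. h \<notin> carrier Gr \<longrightarrow> \<mu> h = 0)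
                      \<and> (\<mu> has_sum 1) (carrier Gr)"

definition translate :: "('g, 'b) monoid_scheme \<Rightarrow> 'g \<Rightarrow> ('g \<Rightarrow> real) \<Rightarrow> ('g \<Rightarrow> real)" where
  "translate Gr g \<mu> = (\<lambda>h. if h \<in> carrier Gr then \<mu> (mult Gr (m_inv Gr g) h) else 0)"

definition l1_dist :: "('g, 'b) monoid_scheme \<Rightarrow> ('g \<Rightarrow> real) \<Rightarrow> ('g \<Rightarrow> real) \<Rightarrow> real" where
  "l1_dist Gr \<mu> \<nu> = infsum (\<lambda>h. \<bar>\<mu> h - \<nu> h\<bar>) (carrier Gr)"

text \<open>Amenable action: a net (m_i) of continuous maps X \<rightarrow> Prob(G) with
  sup_x |m_i(g.x) - g.m_i(x)|_1 \<rightarrow> 0 for all g.  Equivalently (indexing the net by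
  pairs (F, \<epsilon>)): for every finite F \<subseteq> G and \<epsilon> > 0 there is one such map with
  sup_x |m(g.x) - g.m(x)|_1 \<le> \<epsilon> for all g \<in> F.  Prob(G) carries the pointwise
  (weak-* ) topology, which on Prob(G) coincides with the norm topology.\<close>
definition amenable_action :: "('g, 'b) monoid_scheme \<Rightarrow> 'x topology \<Rightarrow> ('g \<Rightarrow> 'x \<Rightarrow> 'x) \<Rightarrow> bool" where
  "amenable_action Gr Xt act \<longleftrightarrow>
     (\<forall>F \<epsilon>. finite F \<and> F \<subseteq> carrier Gr \<and> \<epsilon> > 0 \<longrightarrow>
        (\<exists>m :: 'x \<Rightarrow> 'g \<Rightarrow> real.
           (\<forall>x \<in> topspace Xt. prob_fun Gr (m x)) \<and>
           (\<forall>h. continuous_map Xt euclideanreal (\<lambda>x. m x h)) \<and>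
           (\<forall>g \<in> F. \<forall>x \<in> topspace Xt. l1_dist Gr (m (act g x)) (translate Gr g (m x)) \<le> \<epsilon>)))"

end

theory Submission
  imports Defs
begin

text \<open>Identify \<open>S\<close> with \<open>B \<times> \<nat>\<close>, where \<open>B\<close> is the set of finite lists \<open>L\<close> of distinct generators
  ("blocks"), so that \<open>{0,1}^S\<close> is a product of Cantor spaces \<open>{0,1}^\<nat>\<close>, one per block. The
  coordinates of block \<open>L\<close> are split into two binary streams: the first codes, via a prefix code,
  an infinite reduced word in the letters of \<open>L\<close>, i.e. a point of the boundary of \<open>F_L\<close>; the second
  is a 2-adic integer. A letter of \<open>L\<close> acts on this factor by left multiplication on the boundary
  and by \<open>\<plusminus>1\<close> on the 2-adic integer according as it cancels or is prepended. A generator outside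
  \<open>L\<close> acts on it trivially, except that infinitely many generators \<open>\<delta> (L, n, k) \<in> T\<close> are reserved for
  flipping the coordinate \<open>(L, n)\<close>.

  \<^item> Freeness: a nontrivial reduced word \<open>g = g1 g2\<close> with letters in \<open>L\<close> acts on the factor of \<open>L\<close> by
    cancelling \<open>g2\<close> against the boundary point and prepending \<open>g1\<close>, and it moves the 2-adic integer
    by \<open>|g1| - |g2|\<close>. At a fixed point this forces \<open>|g1| = |g2|\<close>, as \<open>||g1| - |g2|| < 2^|g|\<close>, and then
    the last letter of \<open>g1\<close> is inverse to the first letter of \<open>g2\<close>.
  \<^item> Amenability: for \<open>F\<close> finite, take \<open>L\<close> containing all letters of \<open>F\<close> and let \<open>m x\<close> be uniform
    on the first \<open>n\<close> prefixes of the boundary point of \<open>x\<close> in block \<open>L\<close>; the element \<open>g\<close> maps all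
    but \<open>|g|\<close> of these to prefixes of the boundary point of \<open>g x\<close>.
  \<^item> Minimality of \<open>\<Gamma>_T\<close>: any finite set of coordinates can be flipped independently by positive
    words in reserved generators that lie outside all blocks involved.\<close>

section \<open>Reduced words and the free group\<close>

definition inv_letter :: "'a \<times> bool \<Rightarrow> 'a \<times> bool" where
  "inv_letter x = (fst x, \<not> snd x)"

definition inv_word :: "('a \<times> bool) list \<Rightarrow> ('a \<times> bool) list" where
  "inv_word w = rev (map inv_letter w)"

definition red_cons :: "'a \<times> bool \<Rightarrow> ('a \<times> bool) list \<Rightarrow> ('a \<times> bool) list" where
  "red_cons x r = (case r of [] \<Rightarrow> [x] | y # ys \<Rightarrow> if y = inv_letter x then ys else x # r)"

declare red.simps(2)[simp del]

lemma inv_letter_inv_letter [simp]: "inv_letter (inv_letter x) = x"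
  by (simp add: inv_letter_def)

lemma fst_inv_letter [simp]: "fst (inv_letter x) = fst x"
  by (simp add: inv_letter_def)

lemma eq_inv_letter_iff: "y = inv_letter x \<longleftrightarrow> fst x = fst y \<and> snd x \<noteq> snd y"
  by (auto simp: inv_letter_def prod_eq_iff)

lemma red_Cons: "red (x # xs) = red_cons x (red xs)"
  by (auto simp: red_cons_def red.simps(2) eq_inv_letter_iff split: list.split)

lemma reduced_Cons_iff: "reduced (x # xs) \<longleftrightarrow> reduced xs \<and> (xs = [] \<or> hd xs \<noteq> inv_letter x)"
  by (cases xs) (auto simp: eq_inv_letter_iff)

lemma reduced_iff_nth: "reduced w \<longleftrightarrow> (\<forall>j. Suc j < length w \<longrightarrow> w ! Suc j \<noteq> inv_letter (w ! j))"
proof (induction w)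
  case (Cons x w)
  show ?case
    unfolding reduced_Cons_iff Cons.IH
    by (cases w) (auto simp: less_Suc_eq_0_disj nth_Cons split: nat.split)
qed simp

lemma reduced_red_cons: "reduced r \<Longrightarrow> reduced (red_cons x r)"
  by (cases r) (auto simp: red_cons_def reduced_Cons_iff)

lemma reduced_red: "reduced (red w)"
  by (induction w) (auto simp: red_Cons reduced_red_cons)

lemma red_reduced: "reduced w \<Longrightarrow> red w = w"
  by (induction w) (auto simp: red_Cons red_cons_def reduced_Cons_iff split: list.split)

lemma red_cons_inv_letter: "reduced r \<Longrightarrow> red_cons x (red_cons (inv_letter x) r) = r"
  by (cases r) (auto simp: red_cons_def reduced_Cons_iff split: list.split)

lemma red_append: "red (u @ v) = foldr red_cons u (red v)"
  by (induction u) (auto simp: red_Cons)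

lemma inv_word_append: "inv_word (u @ v) = inv_word v @ inv_word u"
  by (simp add: inv_word_def)

lemma inv_word_inv_word [simp]: "inv_word (inv_word w) = w"
  by (simp add: inv_word_def rev_map comp_def)

lemma fst_set_inv_word: "fst ` set (inv_word w) = fst ` set w"
  by (force simp: inv_word_def image_iff)

lemma reduced_inv_word: "reduced w \<Longrightarrow> reduced (inv_word w)"
  unfolding reduced_iff_nth
proof (intro allI impI)
  fix j assume r: "\<forall>j. Suc j < length w \<longrightarrow> w ! Suc j \<noteq> inv_letter (w ! j)"
    and j: "Suc j < length (inv_word w)"
  then have "w ! Suc (length w - Suc (Suc j)) \<noteq> inv_letter (w ! (length w - Suc (Suc j)))"
    by (simp add: inv_word_def)
  then show "inv_word w ! Suc j \<noteq> inv_letter (inv_word w ! j)"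
    using j by (auto simp: inv_word_def rev_nth Suc_diff_Suc)
qed

locale letter_action =
  fixes f :: "'a \<times> bool \<Rightarrow> 'b \<Rightarrow> 'b" and M :: "'b set"
  assumes closed: "\<And>a x. x \<in> M \<Longrightarrow> f a x \<in> M"
    and inv_letter_inverse: "\<And>a x. x \<in> M \<Longrightarrow> f (inv_letter a) (f a x) = x"
begin

lemma foldr_closed: "x \<in> M \<Longrightarrow> foldr f w x \<in> M"
  by (induction w) (auto simp: closed)

lemma foldr_red_cons: "x \<in> M \<Longrightarrow> foldr f (red_cons a r) x = f a (foldr f r x)"
  using inv_letter_inverse[of "foldr f (tl r) x" "inv_letter a"] foldr_closed[of x "tl r"]
  by (cases r) (auto simp: red_cons_def)

lemma foldr_red: "x \<in> M \<Longrightarrow> foldr f (red w) x = foldr f w x"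
  by (induction w) (simp_all add: red_Cons foldr_red_cons foldr_closed)

lemma foldr_cancel: "x \<in> M \<Longrightarrow> foldr f (w @ inv_word w) x = x"
proof (induction w arbitrary: x)
  case (Cons a w)
  then show ?case
    using inv_letter_inverse[of x "inv_letter a"] closed[of x "inv_letter a"] by (simp add: inv_word_def)
qed (simp add: inv_word_def)

end

interpretation red_cons_action: letter_action red_cons "{r. reduced r}"
  by unfold_locales (simp_all add: reduced_red_cons red_cons_inv_letter[of _ "inv_letter _", simplified])

lemma red_red_right: "red (u @ red v) = red (u @ v)"
  by (simp add: red_append reduced_red red_reduced)

lemma red_cancel_mid: "red (x @ w @ inv_word w @ y) = red (x @ y)"
proof -
  have "red (w @ inv_word w @ y) = red y"
    using red_cons_action.foldr_cancel[of "red y" w] by (simp add: red_append reduced_red)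
  then show ?thesis
    by (metis red_red_right)
qed

lemma red_cancel_mid': "red (x @ inv_word w @ w @ y) = red (x @ y)"
  using red_cancel_mid[of x "inv_word w" y] by simp

lemma free_group_carrier: "w \<in> carrier (free_group S) \<longleftrightarrow> fst ` set w \<subseteq> S \<and> reduced w"
  by (simp add: free_group_def)

lemma free_group_mult: "mult (free_group S) u v = red (u @ v)"
  by (simp add: free_group_def)

lemma free_group_one: "one (free_group S) = []"
  by (simp add: free_group_def)

lemma free_group_inv:
  assumes g: "g \<in> carrier (free_group S)"
  shows "m_inv (free_group S) g = inv_word g"
  unfolding m_inv_def
proof (rule the_equality)
  have "red (g @ inv_word g) = []" "red (inv_word g @ g) = []"
    using red_cancel_mid[of "[]" g "[]"] red_cancel_mid'[of "[]" g "[]"] by simp_all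
  then show "inv_word g \<in> carrier (free_group S) \<and> g \<otimes>\<^bsub>free_group S\<^esub> inv_word g = \<one>\<^bsub>free_group S\<^esub>
      \<and> inv_word g \<otimes>\<^bsub>free_group S\<^esub> g = \<one>\<^bsub>free_group S\<^esub>"
    using g by (simp add: free_group_carrier free_group_mult free_group_one fst_set_inv_word reduced_inv_word)
next
  fix y assume "y \<in> carrier (free_group S) \<and> g \<otimes>\<^bsub>free_group S\<^esub> y = \<one>\<^bsub>free_group S\<^esub>
      \<and> y \<otimes>\<^bsub>free_group S\<^esub> g = \<one>\<^bsub>free_group S\<^esub>"
  then have "reduced y" and gy: "red (g @ y) = []"
    by (auto simp: free_group_carrier free_group_mult free_group_one)
  then have "y = red (inv_word g @ g @ y)"
    using red_cancel_mid'[of "[]" g y] by (simp add: red_reduced)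
  also have "\<dots> = inv_word g"
    using gy g by (metis append_Nil2 free_group_carrier red_red_right red_reduced reduced_inv_word)
  finally show "y = inv_word g" .
qed

section \<open>The boundary of a free group of finite rank as a Cantor space\<close>

text \<open>The letters of a free group of rank \<open>K div 2\<close> are indexed by \<open>{..<K}\<close>; \<open>2 * i\<close> and
  \<open>2 * i + 1\<close> are mutually inverse.\<close>

definition inv_idx :: "nat \<Rightarrow> nat" where
  "inv_idx i = (if even i then Suc i else i - 1)"

lemma inv_idx_inv_idx [simp]: "inv_idx (inv_idx i) = i"
  by (auto simp: inv_idx_def)

lemma inv_idx_less: "even K \<Longrightarrow> i < K \<Longrightarrow> inv_idx i < K"
  by (auto simp: inv_idx_def) (metis Suc_lessI even_Suc odd_pos)

definition prepend :: "'b list \<Rightarrow> (nat \<Rightarrow> 'b) \<Rightarrow> nat \<Rightarrow> 'b" where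
  "prepend xs y n = (if n < length xs then xs ! n else y (n - length xs))"

definition sdrop :: "nat \<Rightarrow> (nat \<Rightarrow> 'b) \<Rightarrow> nat \<Rightarrow> 'b" where
  "sdrop d y n = y (n + d)"

lemma prepend_append: "prepend (xs @ ys) y = prepend xs (prepend ys y)"
  by (auto simp: prepend_def fun_eq_iff nth_append)

lemma sdrop_prepend: "sdrop (length xs) (prepend xs y) = y"
  by (auto simp: prepend_def sdrop_def)

lemma prepend_Nil [simp]: "prepend [] y = y"
  by (simp add: prepend_def fun_eq_iff)

lemma sdrop_0 [simp]: "sdrop 0 y = y"
  by (simp add: sdrop_def fun_eq_iff)

lemma sdrop_sdrop: "sdrop a (sdrop b y) = sdrop (a + b) y"
  by (simp add: sdrop_def fun_eq_iff ac_simps)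

lemma prepend_cong: "(\<And>j. j < N \<Longrightarrow> y j = y' j) \<Longrightarrow> q < N + length xs \<Longrightarrow> prepend xs y q = prepend xs y' q"
  by (simp add: prepend_def)

lemma map_prepend_upt: "map (prepend xs y) [0..<length xs + i] = xs @ map y [0..<i]"
proof (induction i)
  case 0
  then show ?case by (intro nth_equalityI) (simp_all add: prepend_def)
qed (simp add: prepend_def)

lemma map_sdrop_upt: "map (sdrop c y) [0..<i] = map y [c..<c + i]"
proof -
  have "map (sdrop c y) [0..<i] = map y (map (\<lambda>j. j + c) [0..<i])"
    by (simp add: sdrop_def comp_def)
  then show ?thesis
    by (simp add: map_add_upt add.commute)
qed

type_synonym bits = "nat \<Rightarrow> bool"

text \<open>A prefix code for \<open>k\<close> symbols such that every binary stream starts with a code word.\<close>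

definition unary_code :: "nat \<Rightarrow> nat \<Rightarrow> bool list" where
  "unary_code k c = replicate c True @ (if Suc c < k then [False] else [])"

definition unary_decode :: "nat \<Rightarrow> bits \<Rightarrow> nat" where
  "unary_decode k y = (LEAST j. Suc j = k \<or> \<not> y j)"

definition unary_length :: "nat \<Rightarrow> bits \<Rightarrow> nat" where
  "unary_length k y = length (unary_code k (unary_decode k y))"

lemma length_unary_code: "length (unary_code k c) = (if Suc c < k then Suc c else c)"
  by (simp add: unary_code_def)

lemma unary_decode_less: "1 \<le> k \<Longrightarrow> unary_decode k y < k"
  using Least_le[of "\<lambda>j. Suc j = k \<or> \<not> y j" "k - 1"] by (simp add: unary_decode_def)

lemma unary_length_le: "1 \<le> k \<Longrightarrow> unary_length k y \<le> k - 1"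
  using unary_decode_less[of k y] by (auto simp: unary_length_def length_unary_code)

lemma unary_decode_prepend_code: "c < k \<Longrightarrow> unary_decode k (prepend (unary_code k c) y) = c"
  unfolding unary_decode_def
proof (rule Least_equality)
  assume "c < k"
  then show "Suc c = k \<or> \<not> prepend (unary_code k c) y c"
    by (auto simp: prepend_def unary_code_def nth_append)
next
  fix j assume "c < k" "Suc j = k \<or> \<not> prepend (unary_code k c) y j"
  then show "c \<le> j"
    by (cases "j < c") (auto simp: prepend_def unary_code_def nth_append)
qed

lemma unary_length_prepend_code: "c < k \<Longrightarrow> unary_length k (prepend (unary_code k c) y) = length (unary_code k c)"
  by (simp add: unary_length_def unary_decode_prepend_code)

lemma prepend_code_unary_decode:
  assumes k: "1 \<le> k"
  shows "prepend (unary_code k (unary_decode k y)) (sdrop (unary_length k y) y) = y"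
proof
  fix n
  let ?c = "unary_decode k y"
  have ones: "y i" if "i < ?c" for i
    using not_less_Least[OF that[unfolded unary_decode_def]] by simp
  have last: "Suc ?c = k \<or> \<not> y ?c"
    unfolding unary_decode_def by (rule LeastI[of _ "k - 1"]) (use k in auto)
  show "prepend (unary_code k ?c) (sdrop (unary_length k y) y) n = y n"
    using ones last
    by (auto simp: prepend_def sdrop_def unary_length_def unary_code_def nth_append less_Suc_eq)
qed

lemma unary_decode_cong:
  assumes k: "1 \<le> k" and agree: "\<And>j. j < k - 1 \<Longrightarrow> y j = y' j"
  shows "unary_decode k y = unary_decode k y'"
proof -
  let ?P = "\<lambda>j. Suc j = k \<or> \<not> y j" and ?Q = "\<lambda>j. Suc j = k \<or> \<not> y' j"
  have PQ: "?P j = ?Q j" if "j \<le> k - 1" for j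
    using that agree[of j] k by (cases "j < k - 1") auto
  have Q: "?Q (Least ?Q)"
    by (rule LeastI[of _ "k - 1"]) (use k in auto)
  have Q_le: "Least ?Q \<le> k - 1"
    by (rule Least_le) (use k in auto)
  have "Least ?P = Least ?Q"
  proof (rule Least_equality)
    show "?P (Least ?Q)"
      using PQ[OF Q_le] Q by blast
    show "Least ?Q \<le> j" if "?P j" for j
      using that PQ[of j] Q_le by (cases "j \<le> k - 1") (auto intro: Least_le)
  qed
  then show ?thesis
    by (simp add: unary_decode_def)
qed

lemma unary_length_cong:
  "1 \<le> k \<Longrightarrow> (\<And>j. j < k - 1 \<Longrightarrow> y j = y' j) \<Longrightarrow> unary_length k y = unary_length k y'"
  unfolding unary_length_def by (subst unary_decode_cong[of k y y']) auto

text \<open>\<open>skip_idx f\<close> enumerates the \<open>K - 1\<close> letters that may follow the letter \<open>f\<close> in a reduced word.\<close>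

definition skip_idx :: "nat \<Rightarrow> nat \<Rightarrow> nat" where
  "skip_idx f c = (if c < inv_idx f then c else Suc c)"

definition unskip_idx :: "nat \<Rightarrow> nat \<Rightarrow> nat" where
  "unskip_idx a f = (if f < inv_idx a then f else f - 1)"

lemma skip_idx_neq: "skip_idx f c \<noteq> inv_idx f"
  by (auto simp: skip_idx_def)

lemma skip_idx_less: "even K \<Longrightarrow> f < K \<Longrightarrow> c < K - 1 \<Longrightarrow> skip_idx f c < K"
  by (auto simp: skip_idx_def)

lemma unskip_idx_less: "even K \<Longrightarrow> a < K \<Longrightarrow> f < K \<Longrightarrow> f \<noteq> inv_idx a \<Longrightarrow> unskip_idx a f < K - 1"
  using inv_idx_less[of K a] by (auto simp: unskip_idx_def)

lemma skip_idx_unskip_idx: "f \<noteq> inv_idx a \<Longrightarrow> skip_idx a (unskip_idx a f) = f"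
  by (auto simp: skip_idx_def unskip_idx_def)

lemma unskip_idx_skip_idx: "unskip_idx f (skip_idx f c) = c"
  by (auto simp: skip_idx_def unskip_idx_def)

text \<open>A binary stream \<open>B\<close> encodes the infinite reduced word whose first letter \<open>f\<close> is coded by
  \<open>unary_code K f\<close> and each later letter \<open>skip_idx f' c\<close> by \<open>unary_code (K - 1) c\<close>, where \<open>f'\<close> is the
  letter before it. Left multiplication by the letter \<open>a\<close> either cancels the first letter or
  prepends \<open>a\<close>, recoding the old first letter relative to \<open>a\<close>.\<close>

definition boundary_step :: "nat \<Rightarrow> nat \<Rightarrow> bits \<Rightarrow> bits" where
  "boundary_step K a B = (let f = unary_decode K B; B1 = sdrop (unary_length K B) B in
     if f = inv_idx a
     then prepend (unary_code K (skip_idx f (unary_decode (K - 1) B1))) (sdrop (unary_length (K - 1) B1) B1)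
     else prepend (unary_code K a @ unary_code (K - 1) (unskip_idx a f)) B1)"

fun boundary_word_from :: "nat \<Rightarrow> nat \<Rightarrow> bits \<Rightarrow> nat \<Rightarrow> nat" where
  "boundary_word_from K f y 0 = skip_idx f (unary_decode (K - 1) y)"
| "boundary_word_from K f y (Suc n) =
     boundary_word_from K (skip_idx f (unary_decode (K - 1) y)) (sdrop (unary_length (K - 1) y) y) n"

definition boundary_word :: "nat \<Rightarrow> bits \<Rightarrow> nat \<Rightarrow> nat" where
  "boundary_word K B n = (case n of 0 \<Rightarrow> unary_decode K B
     | Suc m \<Rightarrow> boundary_word_from K (unary_decode K B) (sdrop (unary_length K B) B) m)"

definition seq_left_mult :: "nat \<Rightarrow> (nat \<Rightarrow> nat) \<Rightarrow> nat \<Rightarrow> nat" where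
  "seq_left_mult a \<xi> = (if \<xi> 0 = inv_idx a then sdrop 1 \<xi> else prepend [a] \<xi>)"

lemma boundary_word_0: "boundary_word K B 0 = unary_decode K B"
  by (simp add: boundary_word_def)

lemma boundary_word_Suc:
  "boundary_word K B (Suc m) = boundary_word_from K (unary_decode K B) (sdrop (unary_length K B) B) m"
  by (simp add: boundary_word_def)

locale free_alphabet =
  fixes K :: nat
  assumes even_K: "even K" and K_ge: "2 \<le> K"
begin

lemma K_minus_1_pos: "1 \<le> K - 1"
  using K_ge by simp

lemma first_letter_less: "unary_decode K B < K"
  using unary_decode_less K_ge by simp

lemma next_letter_code_less: "unary_decode (K - 1) B < K - 1"
  using unary_decode_less K_minus_1_pos by simp

lemma boundary_step_inv: "a < K \<Longrightarrow> boundary_step K (inv_idx a) (boundary_step K a B) = B"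
proof -
  assume a: "a < K"
  define f where "f = unary_decode K B"
  define B1 where "B1 = sdrop (unary_length K B) B"
  have fK: "f < K"
    using first_letter_less by (simp add: f_def)
  have B: "B = prepend (unary_code K f) B1"
    using prepend_code_unary_decode[of K B] K_ge by (simp add: f_def B1_def)
  show ?thesis
  proof (cases "f = inv_idx a")
    case True
    define c1 where "c1 = unary_decode (K - 1) B1"
    define B2 where "B2 = sdrop (unary_length (K - 1) B1) B1"
    define b where "b = skip_idx f c1"
    have bK: "b < K"
      using skip_idx_less[OF even_K fK next_letter_code_less] by (simp add: b_def c1_def)
    have B1: "B1 = prepend (unary_code (K - 1) c1) B2"
      using prepend_code_unary_decode[of "K - 1" B1] K_minus_1_pos by (simp add: c1_def B2_def)
    have "boundary_step K a B = prepend (unary_code K b) B2"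
      unfolding boundary_step_def Let_def using True by (simp add: f_def B1_def c1_def B2_def b_def)
    moreover have "b \<noteq> inv_idx (inv_idx a)"
      using skip_idx_neq[of f c1] True by (simp add: b_def)
    ultimately show ?thesis
      using True B B1 bK
      by (simp add: boundary_step_def unary_decode_prepend_code unary_length_prepend_code
          sdrop_prepend prepend_append b_def unskip_idx_skip_idx)
  next
    case False
    define r where "r = unskip_idx a f"
    have rK: "r < K - 1"
      using unskip_idx_less[OF even_K a fK False] by (simp add: r_def)
    have "boundary_step K a B = prepend (unary_code K a) (prepend (unary_code (K - 1) r) B1)"
      using False by (simp add: boundary_step_def Let_def f_def[symmetric] B1_def[symmetric] r_def prepend_append)
    then show ?thesis
      using a rK B False
      by (simp add: boundary_step_def unary_decode_prepend_code unary_length_prepend_code sdrop_prepend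
          r_def skip_idx_unskip_idx)
  qed
qed

lemma boundary_word_boundary_step:
  assumes a: "a < K"
  shows "boundary_word K (boundary_step K a B) = seq_left_mult a (boundary_word K B)"
proof
  fix n
  define f where "f = unary_decode K B"
  define B1 where "B1 = sdrop (unary_length K B) B"
  have fK: "f < K"
    using first_letter_less by (simp add: f_def)
  show "boundary_word K (boundary_step K a B) n = seq_left_mult a (boundary_word K B) n"
  proof (cases "f = inv_idx a")
    case True
    have "skip_idx f (unary_decode (K - 1) B1) < K"
      using skip_idx_less[OF even_K fK next_letter_code_less] .
    then show ?thesis
      using True
      by (cases n) (simp_all add: boundary_step_def seq_left_mult_def boundary_word_0 boundary_word_Suc
          unary_decode_prepend_code unary_length_prepend_code sdrop_prepend sdrop_def
          f_def[symmetric] B1_def[symmetric])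
  next
    case False
    have "unskip_idx a f < K - 1"
      using unskip_idx_less[OF even_K a fK False] .
    moreover have "skip_idx a (unskip_idx a f) = f"
      using False by (simp add: skip_idx_unskip_idx)
    ultimately show ?thesis
      using False a
      by (cases n; cases "n - 1")
        (simp_all add: boundary_step_def seq_left_mult_def boundary_word_0 boundary_word_Suc
          unary_decode_prepend_code unary_length_prepend_code sdrop_prepend prepend_def prepend_append
          f_def[symmetric] B1_def[symmetric])
  qed
qed

lemma boundary_word_from_less: "f < K \<Longrightarrow> boundary_word_from K f y n < K"
  by (induction n arbitrary: f y)
    (use skip_idx_less[OF even_K _ next_letter_code_less] in simp_all)

lemma boundary_word_less: "boundary_word K B n < K"
  using first_letter_less boundary_word_from_less by (cases n) (auto simp: boundary_word_0 boundary_word_Suc)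

lemma boundary_word_from_reduced: "boundary_word_from K f y (Suc n) \<noteq> inv_idx (boundary_word_from K f y n)"
  by (induction n arbitrary: f y) (simp_all add: skip_idx_neq)

lemma boundary_word_reduced: "boundary_word K B (Suc n) \<noteq> inv_idx (boundary_word K B n)"
proof (cases n)
  case (Suc m)
  then show ?thesis
    using boundary_word_from_reduced by (simp add: boundary_word_Suc del: boundary_word_from.simps)
qed (simp add: boundary_word_0 boundary_word_Suc skip_idx_neq)

end

section \<open>The boundary action times the odometer\<close>

text \<open>A binary stream is read as a 2-adic integer, least significant digit first.\<close>

definition odometer_succ :: "bits \<Rightarrow> nat \<Rightarrow> bool" where
  "odometer_succ z n = (z n \<noteq> (\<forall>i<n. z i))"

definition odometer_pred :: "bits \<Rightarrow> nat \<Rightarrow> bool" where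
  "odometer_pred z n = (z n \<noteq> (\<forall>i<n. \<not> z i))"

definition bin_value :: "nat \<Rightarrow> bits \<Rightarrow> nat" where
  "bin_value k z = (\<Sum>i<k. if z i then 2 ^ i else 0)"

lemma odometer_succ_all: "(\<forall>i<n. \<not> odometer_succ z i) \<longleftrightarrow> (\<forall>i<n. z i)"
proof (induction n)
  case (Suc n)
  have "\<not> odometer_succ z n \<longleftrightarrow> (z n = (\<forall>i<n. z i))"
    by (simp only: odometer_succ_def) blast
  then show ?case
    using Suc.IH by (auto simp: less_Suc_eq)
qed simp

lemma odometer_pred_all: "(\<forall>i<n. odometer_pred z i) \<longleftrightarrow> (\<forall>i<n. \<not> z i)"
proof (induction n)
  case (Suc n)
  have "odometer_pred z n \<longleftrightarrow> (z n \<noteq> (\<forall>i<n. \<not> z i))"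
    by (simp only: odometer_pred_def)
  then show ?case
    using Suc.IH by (auto simp: less_Suc_eq)
qed simp

lemma odometer_pred_succ [simp]: "odometer_pred (odometer_succ z) = z"
proof
  fix n
  have "odometer_pred (odometer_succ z) n = (odometer_succ z n \<noteq> (\<forall>i<n. z i))"
    by (simp only: odometer_pred_def odometer_succ_all)
  then show "odometer_pred (odometer_succ z) n = z n"
    by (simp only: odometer_succ_def) blast
qed

lemma odometer_succ_pred [simp]: "odometer_succ (odometer_pred z) = z"
proof
  fix n
  have "odometer_succ (odometer_pred z) n = (odometer_pred z n \<noteq> (\<forall>i<n. \<not> z i))"
    by (simp only: odometer_succ_def odometer_pred_all)
  then show "odometer_succ (odometer_pred z) n = z n"
    by (simp only: odometer_pred_def) blast
qed

lemma bin_value_Suc: "bin_value (Suc k) z = bin_value k z + (if z k then 2 ^ k else 0)"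
  by (simp add: bin_value_def)

lemma bin_value_less: "bin_value k z < 2 ^ k"
  by (induction k) (auto simp: bin_value_def)

lemma bin_value_all: "(\<forall>i<k. z i) \<Longrightarrow> bin_value k z = 2 ^ k - 1"
  by (induction k) (auto simp: bin_value_Suc bin_value_def[of 0])

lemma bin_value_not_all: "\<not> (\<forall>i<k. z i) \<Longrightarrow> bin_value k z + 1 < 2 ^ k"
proof (induction k)
  case (Suc k)
  then show ?case
    using bin_value_all[of k z] bin_value_less[of k z]
    by (cases "\<forall>i<k. z i") (auto simp: bin_value_Suc less_Suc_eq)
qed simp

lemma bin_value_odometer_succ: "bin_value k (odometer_succ z) = (bin_value k z + 1) mod 2 ^ k"
proof (induction k)
  case (Suc k)
  show ?case
  proof (cases "\<forall>i<k. z i")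
    case True
    have v: "bin_value k z = 2 ^ k - 1"
      using bin_value_all[OF True] .
    have "bin_value (Suc k) (odometer_succ z) = (if z k then 0 else 2 ^ k)"
      using Suc.IH v True by (simp add: bin_value_Suc odometer_succ_def[of z k])
    moreover have "(bin_value (Suc k) z + 1) mod 2 ^ Suc k = (if z k then 0 else 2 ^ k)"
      using v by (simp add: bin_value_Suc mult_2[symmetric])
    ultimately show ?thesis by simp
  next
    case False
    have v: "bin_value k z + 1 < 2 ^ k"
      using bin_value_not_all[OF False] .
    have "bin_value (Suc k) (odometer_succ z) = bin_value k z + 1 + (if z k then 2 ^ k else 0)"
      using Suc.IH v False by (simp add: bin_value_Suc odometer_succ_def[of z k])
    moreover have "bin_value k z + 1 + (if z k then 2 ^ k else 0) < 2 ^ Suc k"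
      using v by auto
    ultimately show ?thesis by (simp add: bin_value_Suc)
  qed
qed (simp add: bin_value_def)

lemma int_bin_value_odometer_succ: "int (bin_value k (odometer_succ z)) = (int (bin_value k z) + 1) mod 2 ^ k"
  by (simp add: bin_value_odometer_succ zmod_int add.commute)

lemma int_bin_value_odometer_pred: "int (bin_value k (odometer_pred z)) = (int (bin_value k z) - 1) mod 2 ^ k"
proof -
  have "int (bin_value k z) = (int (bin_value k (odometer_pred z)) + 1) mod 2 ^ k"
    using int_bin_value_odometer_succ[of k "odometer_pred z"] by simp
  then have "(int (bin_value k z) - 1) mod 2 ^ k = int (bin_value k (odometer_pred z)) mod 2 ^ k"
    by (simp add: mod_diff_left_eq)
  also have "\<dots> = int (bin_value k (odometer_pred z))"
    using bin_value_less[of k "odometer_pred z"] by (simp add: zmod_int)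
  finally show ?thesis by simp
qed

text \<open>The odometer records the Busemann cocycle of the boundary action.\<close>

definition odometer_step :: "nat \<Rightarrow> nat \<Rightarrow> bits \<Rightarrow> bits \<Rightarrow> bits" where
  "odometer_step K a B Z = (if boundary_word K B 0 = inv_idx a then odometer_pred Z else odometer_succ Z)"

definition block_step :: "nat \<Rightarrow> nat \<Rightarrow> bits \<times> bits \<Rightarrow> bits \<times> bits" where
  "block_step K a p = (boundary_step K a (fst p), odometer_step K a (fst p) (snd p))"

definition reduced_idx :: "nat list \<Rightarrow> bool" where
  "reduced_idx g \<longleftrightarrow> (\<forall>j. Suc j < length g \<longrightarrow> g ! Suc j \<noteq> inv_idx (g ! j))"

lemma reduced_idx_Cons: "reduced_idx (a # g) \<longleftrightarrow> reduced_idx g \<and> (g = [] \<or> g ! 0 \<noteq> inv_idx a)"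
  unfolding reduced_idx_def
  by (cases g) (auto simp: less_Suc_eq_0_disj nth_Cons split: nat.split)

context free_alphabet
begin

lemma odometer_step_inv:
  assumes a: "a < K"
  shows "odometer_step K (inv_idx a) (boundary_step K a B) (odometer_step K a B Z) = Z"
  using boundary_word_reduced[of B 0]
  by (auto simp: odometer_step_def boundary_word_boundary_step[OF a] seq_left_mult_def sdrop_def prepend_def)

lemma block_step_inv: "a < K \<Longrightarrow> block_step K (inv_idx a) (block_step K a p) = p"
  by (simp add: block_step_def boundary_step_inv odometer_step_inv)

text \<open>\<open>q\<close> arises from \<open>p\<close> by cancelling the prefix \<open>g2\<inverse>\<close> of the boundary word and then prepending
  \<open>g1\<close>, the odometer moving by \<open>|g1| - |g2|\<close>.\<close>

definition cancel_prepend :: "nat list \<Rightarrow> nat list \<Rightarrow> bits \<times> bits \<Rightarrow> bits \<times> bits \<Rightarrow> bool" where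
  "cancel_prepend g1 g2 p q \<longleftrightarrow>
     (\<forall>i<length g2. boundary_word K (fst p) i = inv_idx (g2 ! (length g2 - Suc i))) \<and>
     boundary_word K (fst q) = prepend g1 (sdrop (length g2) (boundary_word K (fst p))) \<and>
     (\<forall>k. int (bin_value k (snd q)) = (int (bin_value k (snd p)) + int (length g1) - int (length g2)) mod 2 ^ k)"

lemma cancel_prepend_Nil: "cancel_prepend [] [] p p"
  by (simp add: cancel_prepend_def bin_value_less zmod_int)

lemma block_step_not_cancel:
  assumes "a < K" "boundary_word K (fst q) 0 \<noteq> inv_idx a"
  shows "boundary_word K (fst (block_step K a q)) = prepend [a] (boundary_word K (fst q))"
    and "snd (block_step K a q) = odometer_succ (snd q)"
  using assms by (simp_all add: block_step_def boundary_word_boundary_step seq_left_mult_def odometer_step_def)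

lemma block_step_cancel:
  assumes "a < K" "boundary_word K (fst q) 0 = inv_idx a"
  shows "boundary_word K (fst (block_step K a q)) = sdrop 1 (boundary_word K (fst q))"
    and "snd (block_step K a q) = odometer_pred (snd q)"
  using assms by (simp_all add: block_step_def boundary_word_boundary_step seq_left_mult_def odometer_step_def)

lemma cancel_prepend_block_step_prepend:
  assumes "cancel_prepend g1 g2 p q" "a < K" "boundary_word K (fst q) 0 \<noteq> inv_idx a"
  shows "cancel_prepend (a # g1) g2 p (block_step K a q)"
proof -
  have "prepend [a] (prepend g1 \<xi>) = prepend (a # g1) \<xi>" for \<xi> :: "nat \<Rightarrow> nat"
    using prepend_append[of "[a]" g1] by simp
  moreover have "(int (bin_value k (snd q)) + 1) mod 2 ^ k =
      (int (bin_value k (snd p)) + int (length (a # g1)) - int (length g2)) mod 2 ^ k"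
    if "int (bin_value k (snd q)) = (int (bin_value k (snd p)) + int (length g1) - int (length g2)) mod 2 ^ k" for k
    using that by (simp add: mod_simps algebra_simps)
  ultimately show ?thesis
    using assms(1) block_step_not_cancel[OF assms(2,3)]
    by (simp add: cancel_prepend_def int_bin_value_odometer_succ)
qed

lemma cancel_prepend_block_step_cancel:
  assumes "cancel_prepend [] g2 p q" "a < K" "boundary_word K (fst q) 0 = inv_idx a"
  shows "cancel_prepend [] (a # g2) p (block_step K a q)"
proof -
  have "boundary_word K (fst p) (length g2) = inv_idx a"
    using assms(1,3) by (simp add: cancel_prepend_def sdrop_def)
  then have "\<forall>i<length (a # g2). boundary_word K (fst p) i = inv_idx ((a # g2) ! (length (a # g2) - Suc i))"
    using assms(1) by (auto simp: cancel_prepend_def less_Suc_eq Suc_diff_Suc)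
  moreover have "(int (bin_value k (snd q)) - 1) mod 2 ^ k =
      (int (bin_value k (snd p)) - int (length (a # g2))) mod 2 ^ k"
    if "int (bin_value k (snd q)) = (int (bin_value k (snd p)) - int (length g2)) mod 2 ^ k" for k
    using that by (simp add: mod_simps algebra_simps)
  ultimately show ?thesis
    using assms(1) block_step_cancel[OF assms(2,3)]
    by (simp add: cancel_prepend_def int_bin_value_odometer_pred sdrop_sdrop)
qed

lemma block_action_closed_form:
  assumes "\<forall>a\<in>set g. a < K" and "reduced_idx g"
  shows "\<exists>g1 g2. g = g1 @ g2 \<and> cancel_prepend g1 g2 p (foldr (block_step K) g p)"
  using assms
proof (induction g)
  case Nil
  show ?case
    using cancel_prepend_Nil by simp
next
  case (Cons a g)
  then obtain g1 g2 where g: "g = g1 @ g2" and cp: "cancel_prepend g1 g2 p (foldr (block_step K) g p)"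
    by (auto simp: reduced_idx_Cons)
  have "g = [] \<or> g ! 0 \<noteq> inv_idx a"
    using Cons.prems(2) by (simp add: reduced_idx_Cons)
  then consider (prepend) "boundary_word K (fst (foldr (block_step K) g p)) 0 \<noteq> inv_idx a"
    | (cancel) "g1 = []" "boundary_word K (fst (foldr (block_step K) g p)) 0 = inv_idx a"
    using g cp by (cases g1) (auto simp: cancel_prepend_def prepend_def)
  then show ?case
  proof cases
    case prepend
    then have "a # g = (a # g1) @ g2 \<and> cancel_prepend (a # g1) g2 p (foldr (block_step K) (a # g) p)"
      using cancel_prepend_block_step_prepend[OF cp] g Cons.prems(1) by simp
    then show ?thesis
      by blast
  next
    case cancel
    then have "a # g = [] @ (a # g2) \<and> cancel_prepend [] (a # g2) p (foldr (block_step K) (a # g) p)"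
      using cancel_prepend_block_step_cancel[of g2] cp g Cons.prems(1) by simp
    then show ?thesis
      by blast
  qed
qed

lemma block_action_free:
  assumes gK: "\<forall>a\<in>set g. a < K" and red_g: "reduced_idx g" and "g \<noteq> []"
  shows "foldr (block_step K) g p \<noteq> p"
proof
  assume fixed: "foldr (block_step K) g p = p"
  obtain g1 g2 where g: "g = g1 @ g2"
    and cancel: "\<forall>i<length g2. boundary_word K (fst p) i = inv_idx (g2 ! (length g2 - Suc i))"
    and b: "boundary_word K (fst (foldr (block_step K) g p)) =
      prepend g1 (sdrop (length g2) (boundary_word K (fst p)))"
    and z: "\<forall>k. int (bin_value k (snd (foldr (block_step K) g p))) =
      (int (bin_value k (snd p)) + int (length g1) - int (length g2)) mod 2 ^ k"
    using block_action_closed_form[OF gK red_g] unfolding cancel_prepend_def by blast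
  define d where "d = int (length g1) - int (length g2)"
  define k where "k = length g"
  have "(int (bin_value k (snd p)) + d) mod 2 ^ k = int (bin_value k (snd p)) mod 2 ^ k"
    using z[rule_format, of k] bin_value_less[of k "snd p"] fixed by (simp add: d_def zmod_int add_diff_eq)
  then obtain t where t: "d = 2 ^ k * t"
    by (metis dvd_def mod_eq_dvd_iff add_diff_cancel_left')
  have "int k < 2 ^ k"
    using less_exp[of k] by (metis of_nat_less_iff of_nat_numeral of_nat_power)
  then have "\<bar>d\<bar> < 2 ^ k"
    by (simp add: d_def k_def g)
  then have "t = 0"
    using t by (cases "t = 0") (auto simp: abs_mult dest: mult_left_less_imp_less[of _ "\<bar>t\<bar>" 1])
  then have len: "length g1 = length g2"
    using t by (simp add: d_def)
  define c where "c = length g2"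
  have c: "0 < c"
    using \<open>g \<noteq> []\<close> g len by (auto simp: c_def)
  have "boundary_word K (fst p) (c - 1) = g1 ! (c - 1)"
    using arg_cong[OF b, of "\<lambda>\<xi>. \<xi> (c - 1)"] fixed len c by (simp add: prepend_def c_def)
  moreover have "boundary_word K (fst p) (c - 1) = inv_idx (g2 ! 0)"
    using cancel c by (simp add: c_def)
  moreover have "g ! Suc (c - 1) \<noteq> inv_idx (g ! (c - 1))"
    using red_g[unfolded reduced_idx_def, rule_format, of "c - 1"] c len g by (simp add: c_def)
  ultimately show False
    \<comment> \<open>the last letter of \<open>g1\<close> would be cancelled by the first letter of \<open>g2\<close>\<close>
    using c len g by (simp add: nth_append c_def)
qed

lemma boundary_step_local:
  assumes agree: "\<And>j. j < q + 2 * K \<Longrightarrow> B j = B' j"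
  shows "boundary_step K a B q = boundary_step K a B' q"
proof -
  have f: "unary_decode K B = unary_decode K B'" and l: "unary_length K B = unary_length K B'"
    by (rule unary_decode_cong unary_length_cong; use K_ge agree in simp)+
  define B1 where "B1 = sdrop (unary_length K B) B"
  define B1' where "B1' = sdrop (unary_length K B) B'"
  have agree1: "B1 j = B1' j" if "j < q + K + 1" for j
    using that agree unary_length_le[of K B] K_ge by (simp add: B1_def B1'_def sdrop_def)
  have c: "unary_decode (K - 1) B1 = unary_decode (K - 1) B1'"
    and l1: "unary_length (K - 1) B1 = unary_length (K - 1) B1'"
    by (rule unary_decode_cong unary_length_cong; use K_ge agree1 in simp)+
  have "unary_length (K - 1) B1 \<le> K - 2"
    using unary_length_le[OF K_minus_1_pos, of B1] by linarith
  then have "sdrop (unary_length (K - 1) B1) B1 j = sdrop (unary_length (K - 1) B1) B1' j" if "j < q + 1" for j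
    using that agree1 K_ge by (simp add: sdrop_def)
  then show ?thesis
    using agree1
    unfolding boundary_step_def Let_def f[symmetric] l[symmetric] B1'_def[symmetric] c[symmetric] l1[symmetric]
      B1_def[symmetric]
    by (auto intro!: prepend_cong[where N = "q + 1"])
qed

lemma boundary_word_from_local:
  "(\<And>j. j < Suc n * K \<Longrightarrow> y j = y' j) \<Longrightarrow> boundary_word_from K f y n = boundary_word_from K f y' n"
proof (induction n arbitrary: f y y')
  case 0
  have "unary_decode (K - 1) y = unary_decode (K - 1) y'"
    by (rule unary_decode_cong) (use K_ge 0 in auto)
  then show ?case by simp
next
  case (Suc n)
  have c: "unary_decode (K - 1) y = unary_decode (K - 1) y'"
    and l: "unary_length (K - 1) y = unary_length (K - 1) y'"
    by (rule unary_decode_cong unary_length_cong; use K_ge Suc.prems in simp)+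
  have "unary_length (K - 1) y \<le> K - 2"
    using unary_length_le[OF K_minus_1_pos, of y] by linarith
  then have "boundary_word_from K f' (sdrop (unary_length (K - 1) y) y) n =
      boundary_word_from K f' (sdrop (unary_length (K - 1) y) y') n" for f'
    by (intro Suc.IH) (use Suc.prems in \<open>simp add: sdrop_def\<close>)
  then show ?case
    using c l by simp
qed

lemma boundary_word_local:
  assumes agree: "\<And>j. j < Suc n * K \<Longrightarrow> B j = B' j"
  shows "boundary_word K B n = boundary_word K B' n"
proof -
  have f: "unary_decode K B = unary_decode K B'" and l: "unary_length K B = unary_length K B'"
    by (rule unary_decode_cong unary_length_cong; use K_ge agree in simp)+
  have "unary_length K B \<le> K - 1"
    using unary_length_le[of K B] K_ge by simp
  then have "boundary_word_from K f (sdrop (unary_length K B) B) m =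
      boundary_word_from K f (sdrop (unary_length K B) B') m" if "n = Suc m" for f m
    using that by (intro boundary_word_from_local) (use agree in \<open>simp add: sdrop_def\<close>)
  then show ?thesis
    by (cases n) (simp_all add: boundary_word_0 boundary_word_Suc f l)
qed

lemma odometer_step_local:
  assumes "\<And>j. j < K \<Longrightarrow> B j = B' j" and "\<And>j. j \<le> q \<Longrightarrow> Z j = Z' j"
  shows "odometer_step K a B Z q = odometer_step K a B' Z' q"
proof -
  have "boundary_word K B 0 = boundary_word K B' 0"
    by (rule boundary_word_local) (use assms(1) in simp)
  moreover have "(\<forall>i<q. Z i) = (\<forall>i<q. Z' i)" "(\<forall>i<q. \<not> Z i) = (\<forall>i<q. \<not> Z' i)"
    using assms(2) by auto
  ultimately show ?thesis
    using assms(2)[of q] by (simp add: odometer_step_def odometer_succ_def odometer_pred_def)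
qed

end

section \<open>The action on coordinates indexed by blocks of generators\<close>

text \<open>A block \<open>L\<close> owns the coordinates \<open>(L, n)\<close>: its boundary stream at even \<open>n\<close>, its odometer at odd \<open>n\<close>.\<close>

type_synonym 'a coords = "'a list \<times> nat \<Rightarrow> bool"

definition letter_idx :: "'a list \<Rightarrow> 'a \<times> bool \<Rightarrow> nat" where
  "letter_idx L a = 2 * (LEAST i. L ! i = fst a) + (if snd a then 0 else 1)"

definition idx_letter :: "'a list \<Rightarrow> nat \<Rightarrow> 'a \<times> bool" where
  "idx_letter L i = (L ! (i div 2), even i)"

definition num_letters :: "'a list \<Rightarrow> nat" where
  "num_letters L = 2 * length L"

definition block_streams :: "'a coords \<Rightarrow> 'a list \<Rightarrow> bits \<times> bits" where
  "block_streams x L = ((\<lambda>n. x (L, 2 * n)), (\<lambda>n. x (L, Suc (2 * n))))"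

definition merge_streams :: "bits \<times> bits \<Rightarrow> nat \<Rightarrow> bool" where
  "merge_streams p n = (if even n then fst p (n div 2) else snd p (n div 2))"

definition coord_step :: "('a list \<times> nat \<times> nat \<Rightarrow> 'a) \<Rightarrow> 'a \<times> bool \<Rightarrow> 'a coords \<Rightarrow> 'a coords" where
  "coord_step \<delta> a x = (\<lambda>(L, n).
     if fst a \<in> set L then merge_streams (block_step (num_letters L) (letter_idx L a) (block_streams x L)) n
     else if (\<exists>k. \<delta> (L, n, k) = fst a) then \<not> x (L, n) else x (L, n))"

definition coord_action :: "('a list \<times> nat \<times> nat \<Rightarrow> 'a) \<Rightarrow> ('a \<times> bool) list \<Rightarrow> 'a coords \<Rightarrow> 'a coords" where
  "coord_action \<delta> w = foldr (coord_step \<delta>) w"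

lemma coord_step_apply:
  "coord_step \<delta> a x (L, n) =
     (if fst a \<in> set L then merge_streams (block_step (num_letters L) (letter_idx L a) (block_streams x L)) n
      else if (\<exists>k. \<delta> (L, n, k) = fst a) then \<not> x (L, n) else x (L, n))"
  by (simp add: coord_step_def)

lemma merge_streams_block_streams: "merge_streams (block_streams x L) n = x (L, n)"
  by (auto simp: merge_streams_def block_streams_def elim!: evenE oddE)

lemma free_alphabet_num_letters: "L \<noteq> [] \<Longrightarrow> free_alphabet (num_letters L)"
  by unfold_locales (auto simp: num_letters_def Suc_le_eq)

lemma letter_idx_less: "fst a \<in> set L \<Longrightarrow> letter_idx L a < num_letters L"
proof -
  assume "fst a \<in> set L"
  then obtain i where i: "i < length L" "L ! i = fst a"
    by (auto simp: in_set_conv_nth)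
  then have "(LEAST i. L ! i = fst a) \<le> i"
    by (intro Least_le) simp
  then show ?thesis
    using i by (auto simp: letter_idx_def num_letters_def)
qed

lemma letter_idx_inv_letter: "letter_idx L (inv_letter a) = inv_idx (letter_idx L a)"
  by (auto simp: letter_idx_def inv_letter_def inv_idx_def)

lemma idx_letter_letter_idx: "fst a \<in> set L \<Longrightarrow> idx_letter L (letter_idx L a) = a"
proof -
  assume "fst a \<in> set L"
  then obtain i where "L ! i = fst a"
    by (auto simp: in_set_conv_nth)
  then have "L ! (LEAST i. L ! i = fst a) = fst a"
    by (rule LeastI)
  then show ?thesis
    by (cases a) (auto simp: idx_letter_def letter_idx_def)
qed

lemma idx_letter_inv_idx: "idx_letter L (inv_idx i) = inv_letter (idx_letter L i)"
  by (auto simp: idx_letter_def inv_idx_def inv_letter_def elim!: evenE oddE)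

lemma idx_letter_inj:
  assumes "distinct L" "i < num_letters L" "j < num_letters L" "idx_letter L i = idx_letter L j"
  shows "i = j"
proof -
  have "i div 2 = j div 2" "even i = even j"
    using assms nth_eq_iff_index_eq[of L "i div 2" "j div 2"] by (auto simp: idx_letter_def num_letters_def)
  then show "i = j"
    by (metis div_mult_mod_eq mod2_eq_if)
qed

lemma fst_idx_letter_in: "i < num_letters L \<Longrightarrow> fst (idx_letter L i) \<in> set L"
  by (auto simp: idx_letter_def num_letters_def)

lemma reduced_idx_map_letter_idx:
  assumes "reduced g" "\<forall>a\<in>set g. fst a \<in> set L"
  shows "reduced_idx (map (letter_idx L) g)"
  unfolding reduced_idx_def
proof (intro allI impI notI)
  fix j assume j: "Suc j < length (map (letter_idx L) g)"
    and "map (letter_idx L) g ! Suc j = inv_idx (map (letter_idx L) g ! j)"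
  then have "idx_letter L (letter_idx L (g ! Suc j)) = idx_letter L (letter_idx L (inv_letter (g ! j)))"
    by (simp add: letter_idx_inv_letter)
  then have "g ! Suc j = inv_letter (g ! j)"
    using assms(2) j by (simp add: idx_letter_letter_idx)
  then show False
    using assms(1) j by (simp add: reduced_iff_nth)
qed

lemma block_streams_coord_step:
  "fst a \<in> set L \<Longrightarrow>
    block_streams (coord_step \<delta> a x) L = block_step (num_letters L) (letter_idx L a) (block_streams x L)"
  by (simp add: block_streams_def coord_step_apply merge_streams_def)

lemma coord_step_inv: "coord_step \<delta> (inv_letter a) (coord_step \<delta> a x) = x"
proof (intro ext, clarify)
  fix L n
  show "coord_step \<delta> (inv_letter a) (coord_step \<delta> a x) (L, n) = x (L, n)"
  proof (cases "fst a \<in> set L")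
    case True
    interpret free_alphabet "num_letters L"
      using True by (intro free_alphabet_num_letters) auto
    have "coord_step \<delta> (inv_letter a) (coord_step \<delta> a x) (L, n) =
        merge_streams (block_step (num_letters L) (inv_idx (letter_idx L a)) (block_streams (coord_step \<delta> a x) L)) n"
      using True by (simp add: coord_step_apply letter_idx_inv_letter)
    also have "\<dots> = merge_streams (block_streams x L) n"
      using True block_step_inv[OF letter_idx_less[OF True]] by (simp add: block_streams_coord_step)
    finally show ?thesis
      by (simp add: merge_streams_block_streams)
  qed (auto simp: coord_step_apply)
qed

interpretation coord_step_action: letter_action "coord_step \<delta>" UNIV
  by unfold_locales (simp_all add: coord_step_inv)

lemma coord_action_Nil [simp]: "coord_action \<delta> [] x = x"
  by (simp add: coord_action_def)

lemma coord_action_Cons: "coord_action \<delta> (a # w) x = coord_step \<delta> a (coord_action \<delta> w x)"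
  by (simp add: coord_action_def)

lemma coord_action_append: "coord_action \<delta> (u @ v) x = coord_action \<delta> u (coord_action \<delta> v x)"
  by (simp add: coord_action_def)

lemma coord_action_red: "coord_action \<delta> (red w) x = coord_action \<delta> w x"
  by (simp add: coord_action_def coord_step_action.foldr_red)

lemma block_streams_coord_action:
  "\<forall>a\<in>set g. fst a \<in> set L \<Longrightarrow>
    block_streams (coord_action \<delta> g x) L =
      foldr (block_step (num_letters L)) (map (letter_idx L) g) (block_streams x L)"
  by (induction g) (simp_all add: coord_action_Cons block_streams_coord_step)

lemma coord_step_local:
  assumes agree: "\<And>j. j < n + (4 * num_letters L + 2) \<Longrightarrow> y (L, j) = y' (L, j)"
  shows "coord_step \<delta> a y (L, n) = coord_step \<delta> a y' (L, n)"
proof (cases "fst a \<in> set L")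
  case True
  interpret free_alphabet "num_letters L"
    using True by (intro free_alphabet_num_letters) auto
  let ?B = "fst (block_streams y L)" and ?B' = "fst (block_streams y' L)"
  show ?thesis
  proof (cases "even n")
    case True
    have "boundary_step (num_letters L) (letter_idx L a) ?B (n div 2) =
        boundary_step (num_letters L) (letter_idx L a) ?B' (n div 2)"
      by (rule boundary_step_local) (use agree True in \<open>auto simp: block_streams_def elim!: evenE\<close>)
    then show ?thesis
      using True \<open>fst a \<in> set L\<close> by (simp add: coord_step_apply merge_streams_def block_step_def)
  next
    case False
    have "odometer_step (num_letters L) (letter_idx L a) ?B (snd (block_streams y L)) (n div 2) =
        odometer_step (num_letters L) (letter_idx L a) ?B' (snd (block_streams y' L)) (n div 2)"
      by (rule odometer_step_local) (use agree False in \<open>auto simp: block_streams_def elim!: oddE\<close>)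
    then show ?thesis
      using False \<open>fst a \<in> set L\<close> by (simp add: coord_step_apply merge_streams_def block_step_def)
  qed
qed (use agree[of n] in \<open>auto simp: coord_step_apply\<close>)

lemma coord_action_local:
  assumes "\<And>j. j < Suc n + length w * (4 * num_letters L + 2) \<Longrightarrow> y (L, j) = y' (L, j)"
  shows "coord_action \<delta> w y (L, n) = coord_action \<delta> w y' (L, n)"
  using assms
proof (induction w arbitrary: n)
  case (Cons a w)
  show ?case
    unfolding coord_action_Cons
    by (rule coord_step_local, rule Cons.IH) (use Cons.prems in auto)
qed simp

section \<open>The action on \<open>{0,1}^S\<close>\<close>

lemma topspace_cantor_top: "topspace (cantor_top S) = PiE S (\<lambda>_. UNIV)"
  by (simp add: cantor_top_def)

lemma openin_cantor_cylinder:
  assumes "finite D" "D \<subseteq> S" "x \<in> topspace (cantor_top S)"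
  shows "openin (cantor_top S) {y \<in> topspace (cantor_top S). \<forall>i\<in>D. y i = x i}"
proof -
  have "{y \<in> topspace (cantor_top S). \<forall>i\<in>D. y i = x i} = PiE S (\<lambda>i. if i \<in> D then {x i} else UNIV)"
  proof (intro equalityI subsetI)
    fix y assume "y \<in> {y \<in> topspace (cantor_top S). \<forall>i\<in>D. y i = x i}"
    then show "y \<in> PiE S (\<lambda>i. if i \<in> D then {x i} else UNIV)"
      by (simp add: topspace_cantor_top PiE_iff)
  next
    fix y assume y: "y \<in> PiE S (\<lambda>i. if i \<in> D then {x i} else UNIV)"
    then have "\<forall>i\<in>D. y i = x i"
      using assms(2) unfolding PiE_iff by (metis in_mono singletonD)
    then show "y \<in> {y \<in> topspace (cantor_top S). \<forall>i\<in>D. y i = x i}"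
      using y by (simp add: topspace_cantor_top PiE_iff)
  qed
  moreover have "finite {i \<in> S. (if i \<in> D then {x i} else UNIV) \<noteq> topspace (discrete_topology (UNIV :: bool set))}"
    by (rule finite_subset[OF _ assms(1)]) auto
  then have "openin (cantor_top S) (PiE S (\<lambda>i. if i \<in> D then {x i} else UNIV))"
    unfolding cantor_top_def by (subst openin_PiE_gen) auto
  ultimately show ?thesis
    by simp
qed

lemma continuous_map_cantor_top_finite_dependence:
  assumes D: "finite D" "D \<subseteq> S"
    and into: "\<And>y. y \<in> topspace (cantor_top S) \<Longrightarrow> f y \<in> topspace Y"
    and dep: "\<And>y y'. y \<in> topspace (cantor_top S) \<Longrightarrow> y' \<in> topspace (cantor_top S) \<Longrightarrow>
      (\<forall>i\<in>D. y i = y' i) \<Longrightarrow> f y = f y'"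
  shows "continuous_map (cantor_top S) Y f"
  unfolding continuous_map
proof (intro conjI allI impI)
  fix U assume "openin Y U"
  show "openin (cantor_top S) {x \<in> topspace (cantor_top S). f x \<in> U}"
  proof (subst openin_subopen, intro ballI)
    fix x assume x: "x \<in> {x \<in> topspace (cantor_top S). f x \<in> U}"
    let ?C = "{y \<in> topspace (cantor_top S). \<forall>i\<in>D. y i = x i}"
    have "?C \<subseteq> {x \<in> topspace (cantor_top S). f x \<in> U}"
    proof
      fix y assume "y \<in> ?C"
      then have "f y = f x"
        using x by (intro dep) auto
      then show "y \<in> {x \<in> topspace (cantor_top S). f x \<in> U}"
        using x \<open>y \<in> ?C\<close> by simp
    qed
    moreover have "openin (cantor_top S) ?C"
      using openin_cantor_cylinder[OF D] x by simp
    ultimately show "\<exists>T. openin (cantor_top S) T \<and> x \<in> T \<and> T \<subseteq> {x \<in> topspace (cantor_top S). f x \<in> U}"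
      using x by (intro exI[of _ ?C]) auto
  qed
qed (use into in auto)

definition blocks :: "'a set \<Rightarrow> 'a list set" where
  "blocks S = {L. distinct L \<and> set L \<subseteq> S}"

lemma finite_subset_block:
  assumes "finite A" "A \<subseteq> S"
  obtains L where "L \<in> blocks S" "A \<subseteq> set L"
  using finite_distinct_list[OF assms(1)] assms(2) by (auto simp: blocks_def)

text \<open>\<open>coord\<close> identifies the generators with the coordinates \<open>(L, n)\<close>, and \<open>\<delta> (L, n, k)\<close>, for
  \<open>k \<in> \<nat>\<close>, are the generators reserved for flipping the coordinate \<open>(L, n)\<close>.\<close>

locale block_coordinates =
  fixes S T :: "'a set" and coord :: "'a \<Rightarrow> 'a list \<times> nat" and \<delta> :: "'a list \<times> nat \<times> nat \<Rightarrow> 'a"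
  assumes bij_coord: "bij_betw coord S (blocks S \<times> UNIV)"
    and inj_\<delta>: "inj_on \<delta> (blocks S \<times> UNIV)"
    and \<delta>_in_T: "\<delta> ` (blocks S \<times> UNIV) \<subseteq> T"
begin

lemma finite_subset_nonempty_block:
  assumes "finite A" "A \<subseteq> S"
  obtains L where "L \<in> blocks S" "L \<noteq> []" "A \<subseteq> set L"
proof -
  have "([], 0) \<in> blocks S \<times> UNIV"
    by (simp add: blocks_def)
  then obtain s where "s \<in> S"
    using bij_betw_imp_surj_on[OF bij_coord] by blast
  moreover obtain L where "L \<in> blocks S" "insert s A \<subseteq> set L"
    using finite_subset_block[of "insert s A" S] assms calculation by auto
  ultimately show ?thesis
    using that[of L] by (cases L) auto
qed

definition to_coords :: "('a \<Rightarrow> bool) \<Rightarrow> 'a coords" where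
  "to_coords x = (\<lambda>i. x (inv_into S coord i))"

definition from_coords :: "'a coords \<Rightarrow> ('a \<Rightarrow> bool)" where
  "from_coords y = (\<lambda>s. if s \<in> S then y (coord s) else undefined)"

definition act :: "('a \<times> bool) list \<Rightarrow> ('a \<Rightarrow> bool) \<Rightarrow> ('a \<Rightarrow> bool)" where
  "act g x = from_coords (coord_action \<delta> g (to_coords x))"

lemma coord_in: "s \<in> S \<Longrightarrow> coord s \<in> blocks S \<times> UNIV"
  using bij_coord by (auto simp: bij_betw_def)

lemma inv_coord_in: "i \<in> blocks S \<times> UNIV \<Longrightarrow> inv_into S coord i \<in> S"
  using bij_coord by (auto simp: bij_betw_def intro: inv_into_into)

lemma coord_inv_coord: "i \<in> blocks S \<times> UNIV \<Longrightarrow> coord (inv_into S coord i) = i"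
  using bij_coord by (simp add: bij_betw_def f_inv_into_f)

lemma to_coords_coord: "s \<in> S \<Longrightarrow> to_coords x (coord s) = x s"
  using bij_coord by (simp add: to_coords_def bij_betw_def)

lemma from_coords_in: "from_coords y \<in> topspace (cantor_top S)"
  by (auto simp: from_coords_def topspace_cantor_top PiE_iff extensional_def)

lemma from_coords_to_coords: "x \<in> topspace (cantor_top S) \<Longrightarrow> from_coords (to_coords x) = x"
  by (auto simp: from_coords_def to_coords_coord topspace_cantor_top PiE_iff extensional_def)

lemma to_coords_from_coords: "i \<in> blocks S \<times> UNIV \<Longrightarrow> to_coords (from_coords y) i = y i"
  by (simp add: to_coords_def from_coords_def inv_coord_in coord_inv_coord)

lemma act_apply: "s \<in> S \<Longrightarrow> act g x s = coord_action \<delta> g (to_coords x) (coord s)"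
  by (simp add: act_def from_coords_def)

lemma to_coords_act: "i \<in> blocks S \<times> UNIV \<Longrightarrow> to_coords (act g x) i = coord_action \<delta> g (to_coords x) i"
  by (simp add: act_def to_coords_from_coords)

lemma act_Nil: "x \<in> topspace (cantor_top S) \<Longrightarrow> act [] x = x"
  by (simp add: act_def from_coords_to_coords)

lemma from_coords_cong: "(\<And>i. i \<in> blocks S \<times> UNIV \<Longrightarrow> y i = y' i) \<Longrightarrow> from_coords y = from_coords y'"
  by (auto simp: from_coords_def fun_eq_iff coord_in)

lemma act_append: "act (u @ v) x = act u (act v x)"
  unfolding act_def coord_action_append
proof (rule from_coords_cong)
  fix i :: "'a list \<times> nat" assume "i \<in> blocks S \<times> UNIV"
  then show "coord_action \<delta> u (coord_action \<delta> v (to_coords x)) i =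
      coord_action \<delta> u (to_coords (from_coords (coord_action \<delta> v (to_coords x)))) i"
    by (cases i) (auto intro!: coord_action_local simp: to_coords_from_coords)
qed

lemma act_mult: "act (red (u @ v)) x = act u (act v x)"
  by (simp add: act_def coord_action_red act_append[unfolded act_def])

lemma continuous_map_act: "continuous_map (cantor_top S) (cantor_top S) (act g)"
  unfolding cantor_top_def
proof (subst continuous_map_componentwise, intro conjI ballI)
  show "act g ` topspace (product_topology (\<lambda>_. discrete_topology UNIV) S) \<subseteq> extensional S"
    using from_coords_in by (auto simp: act_def topspace_cantor_top PiE_iff)
  fix s assume s: "s \<in> S"
  obtain L n where Ln: "coord s = (L, n)" "L \<in> blocks S"
    using coord_in[OF s] by auto
  define D where "D = (\<lambda>j. inv_into S coord (L, j)) ` {..<Suc n + length g * (4 * num_letters L + 2)}"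
  have "continuous_map (cantor_top S) (discrete_topology UNIV) (\<lambda>x. act g x s)"
  proof (rule continuous_map_cantor_top_finite_dependence[of D])
    show "finite D" "D \<subseteq> S"
      using Ln(2) by (auto simp: D_def intro!: inv_coord_in)
    fix y y' :: "'a \<Rightarrow> bool" assume "\<forall>i\<in>D. y i = y' i"
    then have "coord_action \<delta> g (to_coords y) (L, n) = coord_action \<delta> g (to_coords y') (L, n)"
      by (intro coord_action_local) (auto simp: to_coords_def D_def)
    then show "act g y s = act g y' s"
      using s Ln by (simp add: act_apply)
  qed simp
  then show "continuous_map (product_topology (\<lambda>_. discrete_topology UNIV) S) (discrete_topology UNIV)
      (\<lambda>x. act g x s)"
    by (simp add: cantor_top_def)
qed

lemma homeomorphic_map_act: "homeomorphic_map (cantor_top S) (cantor_top S) (act g)"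
proof -
  have "act (inv_word g) (act g x) = x" "act g (act (inv_word g) x) = x"
    if "x \<in> topspace (cantor_top S)" for x
    using that red_cancel_mid'[of "[]" g "[]"] red_cancel_mid[of "[]" g "[]"]
    by (simp_all add: act_mult[symmetric] act_Nil)
  then have "homeomorphic_maps (cantor_top S) (cantor_top S) (act g) (act (inv_word g))"
    by (simp add: homeomorphic_maps_def continuous_map_act)
  then show ?thesis
    by (auto simp: homeomorphic_map_maps)
qed

theorem is_action_act: "is_action (free_group S) (cantor_top S) act"
  unfolding is_action_def
  by (simp add: homeomorphic_map_act free_group_one free_group_mult act_Nil act_mult)

theorem free_action_act: "free_action (free_group S) (cantor_top S) act"
  unfolding free_action_def
proof (intro ballI impI notI)
  fix g x assume g: "g \<in> carrier (free_group S)" and "g \<noteq> \<one>\<^bsub>free_group S\<^esub>"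
    and x: "x \<in> topspace (cantor_top S)" and fixed: "act g x = x"
  have "fst ` set g \<subseteq> S" and red_g: "reduced g"
    using g by (auto simp: free_group_carrier)
  moreover have "finite (fst ` set g)"
    by simp
  ultimately obtain L where L: "L \<in> blocks S" "fst ` set g \<subseteq> set L"
    using finite_subset_block by blast
  have g_L: "\<forall>a\<in>set g. fst a \<in> set L"
    using L by auto
  then obtain a where "a \<in> set g"
    using \<open>g \<noteq> \<one>\<^bsub>free_group S\<^esub>\<close> by (cases g) (auto simp: free_group_one)
  then interpret free_alphabet "num_letters L"
    using g_L by (intro free_alphabet_num_letters) auto
  have "coord_action \<delta> g (to_coords x) (L, n) = to_coords x (L, n)" for n
    using to_coords_act[of "(L, n)" g x] L(1) by (simp add: fixed)
  then have "block_streams (coord_action \<delta> g (to_coords x)) L = block_streams (to_coords x) L"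
    by (simp add: block_streams_def)
  moreover have "foldr (block_step (num_letters L)) (map (letter_idx L) g) (block_streams (to_coords x) L)
      \<noteq> block_streams (to_coords x) L"
    using g_L red_g \<open>g \<noteq> \<one>\<^bsub>free_group S\<^esub>\<close>
    by (intro block_action_free) (auto simp: letter_idx_less reduced_idx_map_letter_idx free_group_one)
  ultimately show False
    using block_streams_coord_action[OF g_L] by simp
qed

lemma exists_flip_generator:
  assumes E: "finite E" "E \<subseteq> blocks S \<times> UNIV" and c: "c \<in> blocks S \<times> UNIV"
  obtains t where "t \<in> T" "\<And>i z. i \<in> E \<Longrightarrow> coord_step \<delta> (t, True) z i = (if i = c then \<not> z i else z i)"
proof -
  obtain L n where c: "c = (L, n)" "L \<in> blocks S"
    using c by blast
  have "inj (\<lambda>k. \<delta> (L, n, k))"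
    using inj_\<delta> c(2) by (auto intro!: injI dest: inj_onD)
  then have "infinite (range (\<lambda>k. \<delta> (L, n, k)))"
    using finite_imageD by blast
  moreover have "finite (\<Union>i\<in>E. set (fst i))"
    using E(1) by simp
  ultimately obtain k where k: "\<delta> (L, n, k) \<notin> (\<Union>i\<in>E. set (fst i))"
    by (metis finite_subset image_subsetI rangeI)
  have "coord_step \<delta> (\<delta> (L, n, k), True) z i = (if i = c then \<not> z i else z i)" if "i \<in> E" for i z
  proof -
    obtain L' n' where i: "i = (L', n')" "L' \<in> blocks S"
      using \<open>i \<in> E\<close> E(2) by blast
    have "\<delta> (L, n, k) \<notin> set L'"
      using k \<open>i \<in> E\<close> i(1) by force
    moreover have "(\<exists>k'. \<delta> (L', n', k') = \<delta> (L, n, k)) \<longleftrightarrow> i = c"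
      using inj_onD[OF inj_\<delta>, of "(L', n', _)" "(L, n, k)"] i c by auto
    ultimately show ?thesis
      by (simp add: coord_step_apply i)
  qed
  moreover have "\<delta> (L, n, k) \<in> T"
    using \<delta>_in_T c(2) by auto
  ultimately show ?thesis
    using that by blast
qed

lemma exists_flip_word:
  assumes E: "finite E" "E \<subseteq> blocks S \<times> UNIV" and "C \<subseteq> E"
  shows "\<exists>w. (\<forall>a\<in>set w. fst a \<in> T \<and> snd a) \<and>
    (\<forall>i\<in>E. coord_action \<delta> w y i = (if i \<in> C then \<not> y i else y i))"
proof -
  have "finite C"
    using \<open>C \<subseteq> E\<close> E(1) by (rule finite_subset)
  then show ?thesis
    using \<open>C \<subseteq> E\<close>
  proof (induction C)
    case empty
    show ?case
      by (rule exI[of _ "[]"]) simp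
  next
    case (insert c C)
    obtain w where w: "\<forall>a\<in>set w. fst a \<in> T \<and> snd a"
      and w_E: "\<forall>i\<in>E. coord_action \<delta> w y i = (if i \<in> C then \<not> y i else y i)"
      using insert by blast
    obtain t where "t \<in> T" and flip: "\<And>i z. i \<in> E \<Longrightarrow> coord_step \<delta> (t, True) z i = (if i = c then \<not> z i else z i)"
      using exists_flip_generator[OF E, of c] insert.prems E(2) by blast
    have "coord_action \<delta> ((t, True) # w) y i = (if i \<in> insert c C then \<not> y i else y i)" if "i \<in> E" for i
      using that w_E flip insert.hyps(2) by (auto simp: coord_action_Cons)
    then show ?case
      using w \<open>t \<in> T\<close> by (intro exI[of _ "(t, True) # w"]) auto
  qed
qed

lemma red_positive_word_in_generate:
  assumes "\<forall>a\<in>set w. fst a \<in> T \<and> snd a"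
  shows "red w \<in> generate (free_group S) (free_gen ` T)"
  using assms
proof (induction w)
  case Nil
  then show ?case
    using generate.one[of "free_group S" "free_gen ` T"] by (simp add: free_group_one)
next
  case (Cons a w)
  obtain t where a: "a = (t, True)" "t \<in> T"
    using Cons.prems by (cases a) auto
  have "free_gen t \<in> generate (free_group S) (free_gen ` T)"
    using a by (auto intro: generate.incl)
  then have "free_gen t \<otimes>\<^bsub>free_group S\<^esub> red w \<in> generate (free_group S) (free_gen ` T)"
    using Cons a by (auto intro: generate.eng)
  moreover have "free_gen t \<otimes>\<^bsub>free_group S\<^esub> red w = red (a # w)"
    by (simp add: free_group_mult free_gen_def a red_red_right red_Cons red_reduced reduced_red)
  ultimately show ?case
    by simp
qed

theorem minimal_on_act: "minimal_on (generate (free_group S) (free_gen ` T)) (cantor_top S) act"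
  unfolding minimal_on_def dense_intersects_open
proof (intro ballI allI impI)
  fix x U assume x: "x \<in> topspace (cantor_top S)" and U: "openin (cantor_top S) U \<and> U \<noteq> {}"
  then obtain p where "p \<in> U"
    by blast
  then have "\<exists>V. finite {i \<in> S. V i \<noteq> topspace (discrete_topology UNIV)} \<and>
      (\<forall>i\<in>S. openin (discrete_topology UNIV) (V i)) \<and> p \<in> PiE S V \<and> PiE S V \<subseteq> U"
    using U unfolding cantor_top_def openin_product_topology_alt by blast
  then obtain V where V: "finite {i \<in> S. V i \<noteq> UNIV}" "p \<in> PiE S V" "PiE S V \<subseteq> U"
    by auto
  define D where "D = {i \<in> S. V i \<noteq> UNIV}"
  have "finite (coord ` D)" "coord ` D \<subseteq> blocks S \<times> UNIV"
    using V(1) coord_in by (simp_all add: D_def image_subset_iff)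
  then obtain w where w: "\<forall>a\<in>set w. fst a \<in> T \<and> snd a"
    and w_D: "\<forall>i\<in>coord ` D. coord_action \<delta> w (to_coords x) i =
      (if i \<in> {j \<in> coord ` D. to_coords x j \<noteq> to_coords p j} then \<not> to_coords x i else to_coords x i)"
    using exists_flip_word[of "coord ` D" "{j \<in> coord ` D. to_coords x j \<noteq> to_coords p j}" "to_coords x"] by blast
  have "act (red w) x i = p i" if "i \<in> D" for i
    using w_D that by (auto simp: D_def act_apply coord_action_red to_coords_coord)
  then have "act (red w) x i \<in> V i" if "i \<in> S" for i
    using V(2) that by (cases "V i = UNIV") (auto simp: PiE_iff D_def)
  moreover have "act (red w) x \<in> extensional S"
    using from_coords_in by (simp add: act_def topspace_cantor_top PiE_iff)
  ultimately have "act (red w) x \<in> PiE S V"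
    by (simp add: PiE_iff)
  then show "(\<lambda>g. act g x) ` generate (free_group S) (free_gen ` T) \<inter> U \<noteq> {}"
    using V(3) red_positive_word_in_generate[OF w] by blast
qed

end

section \<open>Amenability\<close>

lemma infsum_uniform_diff_le:
  fixes A B C Z :: "'b set" and n d :: nat
  assumes fin: "finite A" "finite B" and C: "C \<subseteq> A" "C \<subseteq> B"
    and card: "card A \<le> n" "card B \<le> n" "n - d \<le> card C"
    and Z: "A \<subseteq> Z" "B \<subseteq> Z" and n: "0 < n"
  shows "infsum (\<lambda>h. \<bar>(if h \<in> A then 1 / real n else 0) - (if h \<in> B then 1 / real n else 0)\<bar>) Z
    \<le> 2 * real d / real n"
proof -
  let ?f = "\<lambda>h. \<bar>(if h \<in> A then 1 / real n else 0) - (if h \<in> B then 1 / real n else 0)\<bar>"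
  have fin_C: "finite C"
    using C(1) fin(1) finite_subset by blast
  have "infsum ?f Z = infsum ?f (A \<union> B)"
    by (rule infsum_cong_neutral) (use Z in auto)
  also have "\<dots> = sum ?f (A \<union> B)"
    using fin by simp
  also have "\<dots> \<le> (\<Sum>h\<in>A \<union> B. (if h \<in> A - C then 1 / real n else 0) + (if h \<in> B - C then 1 / real n else 0))"
    using C by (intro sum_mono) auto
  also have "\<dots> = real (card (A - C)) / real n + real (card (B - C)) / real n"
    using fin by (simp add: sum.distrib sum.If_cases Int_absorb1 Diff_subset le_supI1 le_supI2 set_diff_eq)
  also have "\<dots> \<le> 2 * real d / real n"
  proof -
    have "card (A - C) \<le> d" "card (B - C) \<le> d"
      using C card fin_C by (simp_all add: card_Diff_subset)
    then show ?thesis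
      using n by (simp add: add_divide_distrib[symmetric] divide_right_mono)
  qed
  finally show ?thesis .
qed

definition prefix_word :: "'a list \<Rightarrow> (nat \<Rightarrow> nat) \<Rightarrow> nat \<Rightarrow> ('a \<times> bool) list" where
  "prefix_word L \<xi> k = map (idx_letter L) (map \<xi> [0..<k])"

lemma length_prefix_word [simp]: "length (prefix_word L \<xi> k) = k"
  by (simp add: prefix_word_def)

lemma prefix_word_in_free_group:
  assumes L: "L \<in> blocks S" and less: "\<And>i. \<xi> i < num_letters L"
    and reduced: "\<And>i. \<xi> (Suc i) \<noteq> inv_idx (\<xi> i)"
  shows "prefix_word L \<xi> k \<in> carrier (free_group S)"
  unfolding free_group_carrier
proof
  show "fst ` set (prefix_word L \<xi> k) \<subseteq> S"
    using L fst_idx_letter_in[OF less] by (auto simp: prefix_word_def blocks_def)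
  show "reduced (prefix_word L \<xi> k)"
    unfolding reduced_iff_nth
  proof (intro allI impI notI)
    fix j assume j: "Suc j < length (prefix_word L \<xi> k)"
      and "prefix_word L \<xi> k ! Suc j = inv_letter (prefix_word L \<xi> k ! j)"
    then have "idx_letter L (\<xi> (Suc j)) = idx_letter L (inv_idx (\<xi> j))"
      by (simp add: prefix_word_def idx_letter_inv_idx)
    moreover have "distinct L" "even (num_letters L)"
      using L by (simp_all add: blocks_def num_letters_def)
    ultimately have "\<xi> (Suc j) = inv_idx (\<xi> j)"
      using idx_letter_inj less inv_idx_less by blast
    then show False
      using reduced by blast
  qed
qed

lemma exists_nat_divide_le:
  fixes \<epsilon> :: real
  assumes "finite R" "0 < \<epsilon>"
  obtains n :: nat where "0 < n" "\<And>r. r \<in> R \<Longrightarrow> r / real n \<le> \<epsilon>"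
proof -
  obtain n :: nat where n: "Max (insert 0 R) / \<epsilon> < n"
    using reals_Archimedean2 by blast
  have "0 \<le> Max (insert 0 R)"
    using assms(1) by simp
  then have "0 < n"
    using n assms(2) by (metis divide_nonneg_pos of_nat_0_less_iff order_le_less_trans)
  moreover have "r / real n \<le> \<epsilon>" if "r \<in> R" for r
  proof -
    have "r \<le> Max (insert 0 R)"
      using assms(1) that by simp
    also have "\<dots> \<le> \<epsilon> * real n"
      using n assms(2) by (simp add: field_simps)
    finally show ?thesis
      using \<open>0 < n\<close> by (simp add: field_simps)
  qed
  ultimately show ?thesis
    using that by blast
qed

context block_coordinates
begin

definition boundary_seq :: "'a list \<Rightarrow> ('a \<Rightarrow> bool) \<Rightarrow> nat \<Rightarrow> nat" where
  "boundary_seq L x = boundary_word (num_letters L) (fst (block_streams (to_coords x) L))"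

definition prefixes :: "'a list \<Rightarrow> nat \<Rightarrow> ('a \<Rightarrow> bool) \<Rightarrow> ('a \<times> bool) list set" where
  "prefixes L n x = prefix_word L (boundary_seq L x) ` {..<n}"

definition prefix_measure :: "'a list \<Rightarrow> nat \<Rightarrow> ('a \<Rightarrow> bool) \<Rightarrow> ('a \<times> bool) list \<Rightarrow> real" where
  "prefix_measure L n x h = (if h \<in> prefixes L n x then 1 / real n else 0)"

lemma card_prefixes: "card (prefixes L n x) = n"
proof -
  have "inj_on (prefix_word L (boundary_seq L x)) {..<n}"
    by (rule inj_onI) (metis length_prefix_word)
  then show ?thesis
    by (simp add: prefixes_def card_image)
qed

lemma prefixes_subset_carrier:
  assumes "L \<in> blocks S" "L \<noteq> []"
  shows "prefixes L n x \<subseteq> carrier (free_group S)"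
proof -
  interpret free_alphabet "num_letters L"
    using assms(2) by (rule free_alphabet_num_letters)
  show ?thesis
    using assms(1) boundary_word_less boundary_word_reduced
    by (auto simp: prefixes_def boundary_seq_def intro!: prefix_word_in_free_group)
qed

lemma prob_fun_prefix_measure:
  assumes "L \<in> blocks S" "L \<noteq> []" "0 < n"
  shows "prob_fun (free_group S) (prefix_measure L n x)"
  unfolding prob_fun_def
proof (intro conjI allI impI)
  show "prefix_measure L n x h = 0" if "h \<notin> carrier (free_group S)" for h
    using that prefixes_subset_carrier[OF assms(1,2)] by (auto simp: prefix_measure_def)
  have "sum (prefix_measure L n x) (prefixes L n x) = 1"
    using assms(3) by (simp add: prefix_measure_def card_prefixes)
  then show "(prefix_measure L n x has_sum 1) (carrier (free_group S))"
    by (intro has_sum_finite_neutralI[OF _ prefixes_subset_carrier[OF assms(1,2)]])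
      (auto simp: prefixes_def prefix_measure_def)
qed (simp add: prefix_measure_def)

lemma continuous_map_prefix_measure:
  assumes "L \<in> blocks S" "L \<noteq> []"
  shows "continuous_map (cantor_top S) euclideanreal (\<lambda>x. prefix_measure L n x h)"
proof -
  interpret free_alphabet "num_letters L"
    using assms(2) by (rule free_alphabet_num_letters)
  define D where "D = (\<lambda>j. inv_into S coord (L, 2 * j)) ` {..<n * num_letters L}"
  show ?thesis
  proof (rule continuous_map_cantor_top_finite_dependence[of D])
    show "finite D" "D \<subseteq> S"
      using assms(1) by (auto simp: D_def intro!: inv_coord_in)
    fix y y' :: "'a \<Rightarrow> bool" assume agree: "\<forall>i\<in>D. y i = y' i"
    have "boundary_seq L y k = boundary_seq L y' k" if "k < n" for k
      unfolding boundary_seq_def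
    proof (rule boundary_word_local)
      fix j assume "j < Suc k * num_letters L"
      moreover have "Suc k * num_letters L \<le> n * num_letters L"
        using that by (intro mult_le_mono1) simp
      ultimately show "fst (block_streams (to_coords y) L) j = fst (block_streams (to_coords y') L) j"
        using agree by (simp add: block_streams_def to_coords_def D_def)
    qed
    then have "prefix_word L (boundary_seq L y) k = prefix_word L (boundary_seq L y') k" if "k < n" for k
      using that by (simp add: prefix_word_def)
    then have "prefixes L n y = prefixes L n y'"
      by (auto simp: prefixes_def image_def)
    then show "prefix_measure L n y h = prefix_measure L n y' h"
      by (simp add: prefix_measure_def)
  qed simp
qed

lemma prefix_words_act:
  assumes L: "L \<in> blocks S" and g: "g \<in> carrier (free_group S)" and g_L: "\<forall>a\<in>set g. fst a \<in> set L"
    and "L \<noteq> []"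
  obtains G1 G2 U where "g = G1 @ G2"
    "\<And>i. prefix_word L (boundary_seq L (act g x)) (length G1 + i) = G1 @ U i"
    "\<And>i. prefix_word L (boundary_seq L x) (length G2 + i) = inv_word G2 @ U i"
proof -
  interpret free_alphabet "num_letters L"
    using \<open>L \<noteq> []\<close> by (rule free_alphabet_num_letters)
  define \<xi> where "\<xi> = boundary_seq L x"
  have "block_streams (to_coords (act g x)) L = block_streams (coord_action \<delta> g (to_coords x)) L"
    using L by (simp add: block_streams_def to_coords_act)
  then have streams: "block_streams (to_coords (act g x)) L =
      foldr (block_step (num_letters L)) (map (letter_idx L) g) (block_streams (to_coords x) L)"
    using block_streams_coord_action[OF g_L] by simp
  have "reduced_idx (map (letter_idx L) g)"
    using g g_L by (simp add: reduced_idx_map_letter_idx free_group_carrier)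
  then obtain g1 g2 where g12: "map (letter_idx L) g = g1 @ g2"
    and cancel: "\<forall>i<length g2. \<xi> i = inv_idx (g2 ! (length g2 - Suc i))"
    and shifted: "boundary_seq L (act g x) = prepend g1 (sdrop (length g2) \<xi>)"
    using block_action_closed_form[of "map (letter_idx L) g" "block_streams (to_coords x) L"] g_L
    by (auto simp: letter_idx_less streams \<xi>_def boundary_seq_def cancel_prepend_def)
  define G1 where "G1 = map (idx_letter L) g1"
  define G2 where "G2 = map (idx_letter L) g2"
  define U where "U i = map (idx_letter L) (map \<xi> [length g2..<length g2 + i])" for i
  have "map (idx_letter L) (map (letter_idx L) g) = g"
    using g_L by (induction g) (auto simp: idx_letter_letter_idx)
  then have "g = G1 @ G2"
    using g12 by (simp add: G1_def G2_def)
  moreover have "prefix_word L (boundary_seq L (act g x)) (length G1 + i) = G1 @ U i" for i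
    by (simp add: prefix_word_def shifted map_prepend_upt map_sdrop_upt G1_def U_def)
  moreover have "prefix_word L \<xi> (length G2 + i) = inv_word G2 @ U i" for i
  proof -
    have "map \<xi> [0..<length g2] = rev (map inv_idx g2)"
      using cancel by (intro nth_equalityI) (auto simp: rev_nth)
    then have "map (idx_letter L) (map \<xi> [0..<length g2]) = inv_word G2"
      by (simp add: inv_word_def G2_def rev_map idx_letter_inv_idx comp_def)
    moreover have "[0..<length g2 + i] = [0..<length g2] @ [length g2..<length g2 + i]"
      by (rule upt_add_eq_append) simp
    ultimately show ?thesis
      by (simp add: prefix_word_def U_def G2_def)
  qed
  ultimately show ?thesis
    using that by (simp add: \<xi>_def)
qed

lemma translate_prefix_measure:
  assumes "g \<in> carrier (free_group S)" "h \<in> carrier (free_group S)"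
  shows "translate (free_group S) g (prefix_measure L n x) h =
    (if red (inv_word g @ h) \<in> prefixes L n x then 1 / real n else 0)"
  using assms by (simp add: translate_def free_group_inv free_group_mult prefix_measure_def)

lemma card_translated_prefixes:
  fixes g :: "('a \<times> bool) list" and L :: "'a list" and n :: nat and x :: "'a \<Rightarrow> bool"
  defines "B \<equiv> {h \<in> carrier (free_group S). red (inv_word g @ h) \<in> prefixes L n x}"
  shows "finite B" "card B \<le> n"
proof -
  have B_image: "B \<subseteq> (\<lambda>p. red (g @ p)) ` prefixes L n x"
  proof
    fix h assume h: "h \<in> B"
    then have "red (g @ red (inv_word g @ h)) = h"
      using red_cancel_mid[of "[]" g h] by (simp add: B_def free_group_carrier red_red_right red_reduced)
    then show "h \<in> (\<lambda>p. red (g @ p)) ` prefixes L n x"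
      using h by (auto simp: B_def intro!: image_eqI[of _ _ "red (inv_word g @ h)"])
  qed
  have fin: "finite (prefixes L n x)"
    by (simp add: prefixes_def)
  then show "finite B"
    using B_image finite_subset by blast
  have "card B \<le> card ((\<lambda>p. red (g @ p)) ` prefixes L n x)"
    using card_mono[OF finite_imageI[OF fin] B_image] .
  also have "\<dots> \<le> n"
    using card_image_le[OF fin, of "\<lambda>p. red (g @ p)"] by (simp add: card_prefixes)
  finally show "card B \<le> n" .
qed

lemma common_prefixes_act:
  assumes L: "L \<in> blocks S" "L \<noteq> []" and g: "g \<in> carrier (free_group S)"
    and g_L: "\<forall>a\<in>set g. fst a \<in> set L"
  obtains C where "C \<subseteq> prefixes L n (act g x)" "n - length g \<le> card C"
    "\<And>h. h \<in> C \<Longrightarrow> red (inv_word g @ h) \<in> prefixes L n x"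
proof -
  obtain G1 G2 U where g12: "g = G1 @ G2"
    and act_pre: "\<And>i. prefix_word L (boundary_seq L (act g x)) (length G1 + i) = G1 @ U i"
    and pre: "\<And>i. prefix_word L (boundary_seq L x) (length G2 + i) = inv_word G2 @ U i"
    using prefix_words_act[OF L(1) g g_L L(2)] by blast
  define C where "C = (\<lambda>i. G1 @ U i) ` {..<n - length g}"
  have "C \<subseteq> prefixes L n (act g x)"
  proof
    fix h assume "h \<in> C"
    then obtain i where "i < n - length g" "h = G1 @ U i"
      by (auto simp: C_def)
    then have "length G1 + i < n" "h = prefix_word L (boundary_seq L (act g x)) (length G1 + i)"
      using g12 act_pre[of i] by simp_all
    then show "h \<in> prefixes L n (act g x)"
      by (auto simp: prefixes_def)
  qed
  moreover have "length (U i) = i" for i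
    using arg_cong[OF pre[of i], of length] by (simp add: inv_word_def)
  then have "inj_on (\<lambda>i. G1 @ U i) {..<n - length g}"
    by (intro inj_onI) (metis same_append_eq)
  then have "n - length g \<le> card C"
    by (simp add: C_def card_image)
  moreover have "red (inv_word g @ h) \<in> prefixes L n x" if "h \<in> C" for h
  proof -
    obtain i where i: "i < n - length g" "h = G1 @ U i"
      using \<open>h \<in> C\<close> by (auto simp: C_def)
    have "inv_word G2 @ U i \<in> prefixes L n x"
      using i g12 by (force simp: prefixes_def pre[symmetric])
    moreover from this have "reduced (inv_word G2 @ U i)"
      using prefixes_subset_carrier[OF L, of n x] by (auto simp: free_group_carrier)
    then have "red (inv_word g @ h) = inv_word G2 @ U i"
      using red_cancel_mid'[of "inv_word G2" G1 "U i"] g12 i(2) by (simp add: inv_word_append red_reduced)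
    ultimately show ?thesis
      by simp
  qed
  ultimately show ?thesis
    using that by blast
qed

lemma l1_dist_prefix_measure_act:
  assumes L: "L \<in> blocks S" "L \<noteq> []" and g: "g \<in> carrier (free_group S)"
    and g_L: "\<forall>a\<in>set g. fst a \<in> set L" and n: "0 < n"
  shows "l1_dist (free_group S) (prefix_measure L n (act g x)) (translate (free_group S) g (prefix_measure L n x))
    \<le> 2 * real (length g) / real n"
proof -
  define A where "A = prefixes L n (act g x)"
  define B where "B = {h \<in> carrier (free_group S). red (inv_word g @ h) \<in> prefixes L n x}"
  obtain C where "C \<subseteq> A" "n - length g \<le> card C" "\<And>h. h \<in> C \<Longrightarrow> red (inv_word g @ h) \<in> prefixes L n x"
    using common_prefixes_act[OF L g g_L] unfolding A_def by blast
  moreover have A: "finite A" "card A \<le> n" "A \<subseteq> carrier (free_group S)"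
    using prefixes_subset_carrier[OF L] by (simp_all add: A_def prefixes_def card_prefixes[unfolded prefixes_def])
  ultimately have "C \<subseteq> B"
    by (auto simp: B_def)
  have "l1_dist (free_group S) (prefix_measure L n (act g x)) (translate (free_group S) g (prefix_measure L n x))
      = infsum (\<lambda>h. \<bar>(if h \<in> A then 1 / real n else 0) - (if h \<in> B then 1 / real n else 0)\<bar>) (carrier (free_group S))"
    unfolding l1_dist_def
    by (intro infsum_cong) (simp add: translate_prefix_measure[OF g] prefix_measure_def A_def B_def)
  also have "\<dots> \<le> 2 * real (length g) / real n"
    using card_translated_prefixes[of g L n x, folded B_def] A \<open>C \<subseteq> A\<close> \<open>C \<subseteq> B\<close> \<open>n - length g \<le> card C\<close> n
    by (intro infsum_uniform_diff_le) (auto simp: B_def)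
  finally show ?thesis .
qed

theorem amenable_action_act: "amenable_action (free_group S) (cantor_top S) act"
  unfolding amenable_action_def
proof (intro allI impI)
  fix F :: "('a \<times> bool) list set" and \<epsilon> :: real
  assume "finite F \<and> F \<subseteq> carrier (free_group S) \<and> 0 < \<epsilon>"
  then have F: "finite F" "F \<subseteq> carrier (free_group S)" and "0 < \<epsilon>"
    by auto
  have "fst ` set g \<subseteq> S" if "g \<in> F" for g
    using subsetD[OF F(2) that] by (simp add: free_group_carrier)
  then have sub: "(\<Union>g\<in>F. fst ` set g) \<subseteq> S"
    by blast
  have fin: "finite (\<Union>g\<in>F. fst ` set g)"
    using F(1) by simp
  obtain L where L: "L \<in> blocks S" "L \<noteq> []" "(\<Union>g\<in>F. fst ` set g) \<subseteq> set L"
    by (rule finite_subset_nonempty_block[OF fin sub])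
  obtain n :: nat where "0 < n" and n: "\<And>r. r \<in> (\<lambda>g. 2 * real (length g)) ` F \<Longrightarrow> r / real n \<le> \<epsilon>"
    by (rule exists_nat_divide_le[OF finite_imageI[OF F(1), of "\<lambda>g. 2 * real (length g)"] \<open>0 < \<epsilon>\<close>]) blast
  show "\<exists>m. (\<forall>x\<in>topspace (cantor_top S). prob_fun (free_group S) (m x)) \<and>
      (\<forall>h. continuous_map (cantor_top S) euclideanreal (\<lambda>x. m x h)) \<and>
      (\<forall>g\<in>F. \<forall>x\<in>topspace (cantor_top S).
        l1_dist (free_group S) (m (act g x)) (translate (free_group S) g (m x)) \<le> \<epsilon>)"
  proof (intro exI[of _ "prefix_measure L n"] conjI ballI allI)
    show "prob_fun (free_group S) (prefix_measure L n x)" for x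
      using L(1,2) \<open>0 < n\<close> by (rule prob_fun_prefix_measure)
    show "continuous_map (cantor_top S) euclideanreal (\<lambda>x. prefix_measure L n x h)" for h
      using L(1,2) by (rule continuous_map_prefix_measure)
    fix g x assume "g \<in> F"
    then have "g \<in> carrier (free_group S)" "\<forall>a\<in>set g. fst a \<in> set L"
      using F(2) L(3) by auto
    then show "l1_dist (free_group S) (prefix_measure L n (act g x))
        (translate (free_group S) g (prefix_measure L n x)) \<le> \<epsilon>"
      using l1_dist_prefix_measure_act[OF L(1,2) _ _ \<open>0 < n\<close>, of g x] n[OF imageI[OF \<open>g \<in> F\<close>]]
      by (meson order_trans)
  qed
qed

end

section \<open>Cardinalities\<close>

lemma times_self_lepoll: "infinite A \<Longrightarrow> A \<times> A \<lesssim> A"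
  using card_of_Times_same_infinite[of A] eqpoll_iff_card_of_ordIso eqpoll_imp_lepoll by blast

lemma nat_times_lepoll:
  assumes "infinite A"
  shows "(UNIV :: nat set) \<times> A \<lesssim> A"
proof -
  have "(UNIV :: nat set) \<times> A \<lesssim> A \<times> A"
    using assms by (intro times_lepoll_mono) (simp_all add: infinite_le_lepoll[symmetric])
  also have "\<dots> \<lesssim> A"
    by (rule times_self_lepoll[OF assms])
  finally show ?thesis .
qed

lemma lists_of_length_lepoll:
  assumes "infinite A"
  shows "{xs \<in> lists A. length xs = n} \<lesssim> A"
proof (induction n)
  case 0
  obtain a where "a \<in> A"
    using infinite_imp_nonempty[OF assms] by blast
  have "{xs \<in> lists A. length xs = 0} = {[]}"
    by auto
  then show ?case
    using \<open>a \<in> A\<close> by (auto simp: lepoll_def intro!: exI[of _ "\<lambda>_. a"])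
next
  case (Suc n)
  let ?Ln = "\<lambda>n. {xs \<in> lists A. length xs = n}"
  have "inj_on (\<lambda>xs. (hd xs, tl xs)) (?Ln (Suc n))"
  proof (rule inj_onI)
    fix xs ys assume "xs \<in> ?Ln (Suc n)" "ys \<in> ?Ln (Suc n)" "(hd xs, tl xs) = (hd ys, tl ys)"
    then show "xs = ys"
      by (cases xs; cases ys) auto
  qed
  moreover have "(\<lambda>xs. (hd xs, tl xs)) ` ?Ln (Suc n) \<subseteq> A \<times> ?Ln n"
  proof (rule image_subsetI)
    fix xs assume "xs \<in> ?Ln (Suc n)"
    then show "(hd xs, tl xs) \<in> A \<times> ?Ln n"
      by (cases xs) auto
  qed
  ultimately have "?Ln (Suc n) \<lesssim> A \<times> ?Ln n"
    unfolding lepoll_def by blast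
  also have "\<dots> \<lesssim> A \<times> A"
    by (rule times_lepoll_mono[OF lepoll_refl Suc.IH])
  also have "\<dots> \<lesssim> A"
    by (rule times_self_lepoll[OF assms])
  finally show ?case .
qed

lemma lists_lepoll:
  assumes "infinite A"
  shows "lists A \<lesssim> A"
proof -
  have "inj_on (\<lambda>xs. (length xs, xs)) (lists A)"
    by (simp add: inj_on_def)
  moreover have "(\<lambda>xs. (length xs, xs)) ` lists A \<subseteq> (SIGMA n:UNIV. {xs \<in> lists A. length xs = n})"
    by auto
  ultimately have "lists A \<lesssim> (SIGMA n:UNIV. {xs \<in> lists A. length xs = n})"
    unfolding lepoll_def by blast
  also have "\<dots> \<lesssim> (UNIV :: nat set) \<times> A"
    by (rule Sigma_lepoll_mono) (simp_all add: lists_of_length_lepoll[OF assms])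
  also have "\<dots> \<lesssim> A"
    by (rule nat_times_lepoll[OF assms])
  finally show ?thesis .
qed

lemma eqpoll_blocks_times_nat:
  assumes "infinite S"
  shows "S \<approx> blocks S \<times> (UNIV :: nat set)"
proof (rule lepoll_antisym)
  have "inj_on (\<lambda>s. ([s], 0 :: nat)) S" "(\<lambda>s. ([s], 0)) ` S \<subseteq> blocks S \<times> UNIV"
    by (auto simp: inj_on_def blocks_def)
  then show "S \<lesssim> blocks S \<times> (UNIV :: nat set)"
    unfolding lepoll_def by blast
  have "blocks S \<lesssim> lists S"
    by (rule subset_imp_lepoll) (auto simp: blocks_def)
  also have "\<dots> \<lesssim> S"
    by (rule lists_lepoll[OF assms])
  finally have "blocks S \<times> (UNIV :: nat set) \<lesssim> S \<times> (UNIV :: nat set)"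
    by (rule times_lepoll_mono) simp
  also have "\<dots> \<approx> (UNIV :: nat set) \<times> S"
    by (rule times_commute_eqpoll)
  also have "\<dots> \<lesssim> S"
    by (rule nat_times_lepoll[OF assms])
  finally show "blocks S \<times> (UNIV :: nat set) \<lesssim> S" .
qed

lemma blocks_times_nat_nat_lepoll:
  assumes "infinite S"
  shows "blocks S \<times> (UNIV :: (nat \<times> nat) set) \<lesssim> S"
proof -
  have "blocks S \<times> (UNIV :: (nat \<times> nat) set) \<approx> (blocks S \<times> (UNIV :: nat set)) \<times> (UNIV :: nat set)"
    using eqpoll_sym[OF times_assoc_eqpoll[of "blocks S" "UNIV :: nat set" "UNIV :: nat set"]]
    by (simp only: UNIV_Times_UNIV)
  also have "\<dots> \<lesssim> S \<times> (UNIV :: nat set)"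
    by (intro times_lepoll_mono eqpoll_imp_lepoll eqpoll_sym[OF eqpoll_blocks_times_nat[OF assms]] lepoll_refl)
  also have "\<dots> \<approx> (UNIV :: nat set) \<times> S"
    by (rule times_commute_eqpoll)
  also have "\<dots> \<lesssim> S"
    by (rule nat_times_lepoll[OF assms])
  finally show ?thesis .
qed

theorem proposition6p8:
  fixes S T :: "'a set"
  assumes "infinite S" and "T \<subseteq> S" and "T \<approx> S"
  shows "\<exists>act :: ('a \<times> bool) list \<Rightarrow> ('a \<Rightarrow> bool) \<Rightarrow> ('a \<Rightarrow> bool).
           is_action (free_group S) (cantor_top S) act \<and>
           amenable_action (free_group S) (cantor_top S) act \<and>
           free_action (free_group S) (cantor_top S) act \<and>
           minimal_on (generate (free_group S) (free_gen ` T)) (cantor_top S) act"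
proof -
  obtain coord where "bij_betw coord S (blocks S \<times> (UNIV :: nat set))"
    using eqpoll_blocks_times_nat[OF assms(1)] by (auto simp: eqpoll_def)
  moreover have "blocks S \<times> (UNIV :: (nat \<times> nat) set) \<lesssim> T"
    \<comment> \<open>only this injection into \<open>T\<close> is needed, not the hypothesis \<open>T \<subseteq> S\<close>\<close>
    using lepoll_trans2[OF blocks_times_nat_nat_lepoll[OF assms(1)] eqpoll_sym[OF assms(3)]] .
  then obtain \<delta> :: "'a list \<times> nat \<times> nat \<Rightarrow> 'a"
    where "inj_on \<delta> (blocks S \<times> UNIV)" "\<delta> ` (blocks S \<times> UNIV) \<subseteq> T"
    unfolding lepoll_def by blast
  ultimately interpret block_coordinates S T coord \<delta>
    by unfold_locales
  show ?thesis
    using is_action_act amenable_action_act free_action_act minimal_on_act by blast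
qed

end
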